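(* For $p\in[1,\infty)$ and $\zeta\in\mathcal{M}^{n-1}_p$ the functional $\delta_{\zeta,p}(u,v)=\left(\int_{\mathbb{R}^n}|\zeta(u(x))-\zeta(v(x))|^p\,dx\right)^{1/p}$ defines a metric on $\operatorname{Conv}_{\text{coe}}^{(n)}(\mathbb{R}^n)$. Furthermore, for every $u_k,u\in\operatorname{Conv}_{\text{coe}}^{(n)}(\mathbb{R}^n)$ we have $\delta_{\zeta,p}(u_k,u)\to 0$ if and only if $u_k$ epi-converges to $u$ as $k\to\infty$.
   Context: $\operatorname{Conv}_{\text{coe}}^{(n)}(\mathbb{R}^n)$ denotes the space of proper, lower semicontinuous, coercive, convex functions $u:\mathbb{R}^n\to\mathbb{R}\cup\{+\infty\}$ whose domain $\operatorname{dom}u=\{x: u(x)<+\infty\}$ has dimension $n$ (equivalently $0<\int e^{-u}<\infty$). For $p\in[1,\infty)$, $\mathcal{M}^{n-1}_p$ is the set of continuous, strictly decreasing functions $\zeta:\mathbb{R}\to(0,\infty)$ such that $\int_0^\infty \zeta(t)^p t^{n-1}\,dt<+\infty$; one sets $\zeta(+\infty)=0$. A sequence $u_k$ epi-converges to $u$ if for every $x$: $\liminf u_k(x_k)\ge u(x)$ for every sequence $x_k\to x$, and $\limsup u_k(x_k)\le u(x)$ for some sequence $x_k\to x$. *)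

theory Defs
  imports "HOL-Analysis.Analysis"
begin

text \<open>Extended-valued functions u : R^n -> R \<union> {+\<infinity>} are modelled as functions
  into ereal that never take the value -\<infinity>.\<close>

definition dom_fun :: "('a \<Rightarrow> ereal) \<Rightarrow> 'a set" where
  "dom_fun u = {x. u x < \<infinity>}"

definition proper_fun :: "('a \<Rightarrow> ereal) \<Rightarrow> bool" where
  "proper_fun u \<longleftrightarrow> (\<forall>x. u x \<noteq> -\<infinity>) \<and> (\<exists>x. u x < \<infinity>)"

definition lsc_fun :: "('a::topological_space \<Rightarrow> ereal) \<Rightarrow> bool" where
  "lsc_fun u \<longleftrightarrow> (\<forall>x X. X \<longlonglongrightarrow> x \<longrightarrow> u x \<le> liminf (\<lambda>k. u (X k)))"

definition convex_fun :: "('a::real_vector \<Rightarrow> ereal) \<Rightarrow> bool" where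
  "convex_fun u \<longleftrightarrow> (\<forall>x y (t::real). 0 \<le> t \<and> t \<le> 1 \<longrightarrow>
      u ((1 - t) *\<^sub>R x + t *\<^sub>R y) \<le> ereal (1 - t) * u x + ereal t * u y)"

definition coercive_fun :: "('a::real_normed_vector \<Rightarrow> ereal) \<Rightarrow> bool" where
  "coercive_fun u \<longleftrightarrow> (u \<longlongrightarrow> \<infinity>) at_infinity"

definition Conv_coe :: "('a::euclidean_space \<Rightarrow> ereal) set" where
  "Conv_coe = {u. proper_fun u \<and> lsc_fun u \<and> coercive_fun u \<and> convex_fun u
                  \<and> aff_dim (dom_fun u) = int DIM('a)}"

definition M_class :: "nat \<Rightarrow> real \<Rightarrow> (real \<Rightarrow> real) set" where
  "M_class n p = {\<zeta>. continuous_on UNIV \<zeta> \<and> (\<forall>s t. s < t \<longrightarrow> \<zeta> t < \<zeta> s) \<and> (\<forall>t. 0 < \<zeta> t)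
      \<and> (\<integral>\<^sup>+ t. indicator {0..} t * ennreal (\<zeta> t powr p * t ^ (n - 1)) \<partial>lborel) < \<infinity>}"

definition zeta_ext :: "(real \<Rightarrow> real) \<Rightarrow> ereal \<Rightarrow> real" where
  "zeta_ext \<zeta> t = (if t = \<infinity> then 0 else \<zeta> (real_of_ereal t))"

definition delta_zp :: "(real \<Rightarrow> real) \<Rightarrow> real \<Rightarrow> ('a::euclidean_space \<Rightarrow> ereal) \<Rightarrow> ('a \<Rightarrow> ereal) \<Rightarrow> real" where
  "delta_zp \<zeta> p u v =
     (integral\<^sup>L lebesgue (\<lambda>x. \<bar>zeta_ext \<zeta> (u x) - zeta_ext \<zeta> (v x)\<bar> powr p)) powr (1 / p)"

definition epi_converges :: "(nat \<Rightarrow> 'a::topological_space \<Rightarrow> ereal) \<Rightarrow> ('a \<Rightarrow> ereal) \<Rightarrow> bool" where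
  "epi_converges uk u \<longleftrightarrow> (\<forall>x.
      (\<forall>X. X \<longlonglongrightarrow> x \<longrightarrow> u x \<le> liminf (\<lambda>k. uk k (X k))) \<and>
      (\<exists>X. X \<longlonglongrightarrow> x \<and> limsup (\<lambda>k. uk k (X k)) \<le> u x))"

end

theory Submission
  imports Defs
begin

text \<open>Every function in Conv_coe grows at least linearly, so with \<open>\<zeta>\<close> decreasing and
  \<open>\<zeta>(t)\<^sup>p t\<^sup>n\<^sup>-\<^sup>1\<close> integrable, \<open>|\<zeta>\<circ>u - \<zeta>\<circ>v|\<^sup>p\<close> has an integrable radial majorant; \<open>\<delta>\<close> is
  then an \<open>L\<^sup>p\<close> distance, and it separates points because \<open>\<delta>(u, v) = 0\<close> makes the constant
  sequence \<open>u\<close> epi-converge to \<open>v\<close>.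

  If \<open>uk\<close> epi-converges to \<open>u\<close>, the \<open>uk\<close> are uniformly coercive and, by convexity, converge
  to \<open>u\<close> at every point off the null set \<open>\<partial> dom u\<close>; dominated convergence gives \<open>\<delta>(uk, u) \<rightarrow> 0\<close>.
  Conversely, if either half of epi-convergence fails, convexity spreads a small value of
  \<open>uk\<close> at one point over a set of measure bounded below on which \<open>\<zeta>\<circ>uk\<close> and \<open>\<zeta>\<circ>u\<close> stay
  apart, so \<open>\<delta>(uk, u)\<close> cannot tend to \<open>0\<close>.\<close>

abbreviation delta_integrand ::
    "(real \<Rightarrow> real) \<Rightarrow> real \<Rightarrow> ('a \<Rightarrow> ereal) \<Rightarrow> ('a \<Rightarrow> ereal) \<Rightarrow> 'a \<Rightarrow> real" where
  "delta_integrand \<zeta> p u v \<equiv> \<lambda>x. \<bar>zeta_ext \<zeta> (u x) - zeta_ext \<zeta> (v x)\<bar> powr p"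

section \<open>The class M\<close>

lemma
  assumes "\<zeta> \<in> M_class n p"
  shows M_class_continuous: "continuous_on UNIV \<zeta>"
    and M_class_strict_antimono: "s < t \<Longrightarrow> \<zeta> t < \<zeta> s"
    and M_class_pos: "0 < \<zeta> t"
    and M_class_integral_finite:
      "(\<integral>\<^sup>+ t. indicator {0..} t * ennreal (\<zeta> t powr p * t ^ (n - 1)) \<partial>lborel) < \<infinity>"
  using assms unfolding M_class_def by auto

lemma M_class_antimono:
  assumes "\<zeta> \<in> M_class n p" "s \<le> t"
  shows "\<zeta> t \<le> \<zeta> s"
  using M_class_strict_antimono[OF assms(1), of s t] assms(2) by (cases "s = t") auto

lemma M_class_powr_antimono:
  assumes "\<zeta> \<in> M_class n p" "0 \<le> p" "s \<le> t"
  shows "\<zeta> t powr p \<le> \<zeta> s powr p"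
  using M_class_antimono[OF assms(1,3)] M_class_pos[OF assms(1)] assms(2)
  by (intro powr_mono2) (auto intro: less_imp_le)

lemma M_class_borel: "\<zeta> \<in> M_class n p \<Longrightarrow> \<zeta> \<in> borel_measurable borel"
  by (rule borel_measurable_continuous_onI[OF M_class_continuous])

lemma M_class_ex_less:
  assumes z: "\<zeta> \<in> M_class n p" and p: "0 \<le> p" and e: "0 < e"
  shows "\<exists>T. \<zeta> T < e"
proof (rule ccontr)
  assume "\<nexists>T. \<zeta> T < e"
  then have ge: "e \<le> \<zeta> t" for t by (simp add: not_less)
  obtain r where r: "(\<integral>\<^sup>+ t. indicator {0..} t * ennreal (\<zeta> t powr p * t ^ (n - 1)) \<partial>lborel) = ennreal r"
    and "0 \<le> r"
    using M_class_integral_finite[OF z]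
    by (cases "\<integral>\<^sup>+ t. indicator {0..} t * ennreal (\<zeta> t powr p * t ^ (n - 1)) \<partial>lborel") auto
  have "e powr p * real N \<le> r" for N :: nat
  proof -
    \<comment> \<open>On \<open>[1, 1 + N]\<close> the integrand is at least \<open>e\<^sup>p\<close>.\<close>
    have "ennreal (e powr p * real N) = (\<integral>\<^sup>+ t. ennreal (e powr p) * indicator {1..1 + real N} t \<partial>lborel)"
      using e by (simp add: nn_integral_cmult ennreal_mult)
    also have "\<dots> \<le> ennreal r"
      unfolding r[symmetric]
    proof (intro nn_integral_mono)
      fix t :: real
      have "e powr p \<le> \<zeta> t powr p * t ^ (n - 1)" if "1 \<le> t"
      proof -
        have "e powr p \<le> \<zeta> t powr p" using ge[of t] e p by (intro powr_mono2) auto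
        also have "\<dots> \<le> \<zeta> t powr p * t ^ (n - 1)"
          using that by (intro mult_le_cancel_left1[THEN iffD2] conjI) (auto simp: one_le_power)
        finally show ?thesis .
      qed
      then show "ennreal (e powr p) * indicator {1..1 + real N} t
          \<le> indicator {0..} t * ennreal (\<zeta> t powr p * t ^ (n - 1))"
        by (auto simp: indicator_def intro!: ennreal_leI)
    qed
    finally show ?thesis using \<open>0 \<le> r\<close> by simp
  qed
  moreover obtain N :: nat where "r / e powr p < real N" using reals_Archimedean2 by blast
  ultimately show False using e by (simp add: field_simps) (metis not_less)
qed

lemma zeta_ext_nonneg: "\<zeta> \<in> M_class n p \<Longrightarrow> 0 \<le> zeta_ext \<zeta> w"
  using M_class_pos[of \<zeta> n p] unfolding zeta_ext_def by (auto intro: less_imp_le)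

lemma zeta_ext_le_zeta:
  assumes "\<zeta> \<in> M_class n p" "ereal b \<le> w"
  shows "zeta_ext \<zeta> w \<le> \<zeta> b"
  using assms M_class_antimono[OF assms(1), of b] M_class_pos[OF assms(1), of b]
  by (cases w) (auto simp: zeta_ext_def)

lemma zeta_le_zeta_ext:
  assumes "\<zeta> \<in> M_class n p" "w \<noteq> -\<infinity>" "w \<le> ereal a"
  shows "\<zeta> a \<le> zeta_ext \<zeta> w"
  using assms M_class_antimono[OF assms(1), of _ a] by (cases w) (auto simp: zeta_ext_def)

lemma zeta_ext_borel:
  assumes "\<zeta> \<in> M_class n p"
  shows "zeta_ext \<zeta> \<in> borel_measurable borel"
proof -
  have "(\<lambda>t::ereal. \<zeta> (real_of_ereal t)) \<in> borel_measurable borel"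
    using M_class_borel[OF assms] by measurable
  then show ?thesis unfolding zeta_ext_def[abs_def] by measurable
qed

lemma tendsto_zeta_ext:
  assumes z: "\<zeta> \<in> M_class n p" and p: "0 \<le> p"
    and lim: "(w \<longlongrightarrow> l) F" and l: "l \<noteq> -\<infinity>"
  shows "((\<lambda>k. zeta_ext \<zeta> (w k)) \<longlongrightarrow> zeta_ext \<zeta> l) F"
proof (cases l)
  case (real c)
  have "((\<lambda>k. \<zeta> (real_of_ereal (w k))) \<longlongrightarrow> \<zeta> c) F"
    using M_class_continuous[OF z] lim_real_of_ereal[OF lim[unfolded real]]
    by (rule continuous_on_tendsto_compose) simp_all
  moreover have "\<forall>\<^sub>F k in F. w k < \<infinity>"
    using lim by (rule order_tendstoD) (simp add: real)
  then have "\<forall>\<^sub>F k in F. \<zeta> (real_of_ereal (w k)) = zeta_ext \<zeta> (w k)"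
    by eventually_elim (simp add: zeta_ext_def)
  ultimately show ?thesis by (simp add: real zeta_ext_def tendsto_cong)
next
  case PInf
  have "((\<lambda>k. zeta_ext \<zeta> (w k)) \<longlongrightarrow> 0) F"
  proof (rule order_tendstoI)
    fix e :: real assume "0 < e"
    then obtain T where T: "\<zeta> T < e" using M_class_ex_less[OF z p] by blast
    have "\<forall>\<^sub>F k in F. ereal T < w k" using lim by (rule order_tendstoD) (simp add: PInf)
    then show "\<forall>\<^sub>F k in F. zeta_ext \<zeta> (w k) < e"
      by eventually_elim (rule le_less_trans[OF zeta_ext_le_zeta[OF z] T], simp)
  qed (use zeta_ext_nonneg[OF z] in \<open>auto intro!: always_eventually intro: less_le_trans\<close>)
  then show ?thesis by (simp add: PInf zeta_ext_def)
next
  case MInf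
  with l show ?thesis by simp
qed

section \<open>Lower semicontinuity and epi-convergence\<close>

lemma lsc_fun_closed_sublevel:
  fixes u :: "'a::metric_space \<Rightarrow> ereal"
  assumes "lsc_fun u"
  shows "closed {x. u x \<le> c}"
  unfolding closed_sequential_limits
proof (intro allI impI, elim conjE)
  fix X x assume X: "\<forall>k. X k \<in> {x. u x \<le> c}" "X \<longlonglongrightarrow> x"
  have "u x \<le> liminf (\<lambda>k. u (X k))" using assms X(2) unfolding lsc_fun_def by blast
  also have "\<dots> \<le> c" using X(1) by (intro Liminf_le) auto
  finally show "x \<in> {x. u x \<le> c}" by simp
qed

lemma lsc_fun_open_superlevel:
  fixes u :: "'a::metric_space \<Rightarrow> ereal"
  assumes "lsc_fun u"
  shows "open {x. c < u x}"
proof -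
  have "{x. c < u x} = - {x. u x \<le> c}" by auto
  then show ?thesis using lsc_fun_closed_sublevel[OF assms] by (simp add: open_Compl)
qed

lemma lsc_fun_borel_measurable:
  fixes u :: "'a::metric_space \<Rightarrow> ereal"
  assumes "lsc_fun u"
  shows "u \<in> borel_measurable borel"
  unfolding borel_measurable_ereal_iff_Ioi
proof
  fix a
  have "u -` {a<..} = {x. a < u x}" by auto
  then show "u -` {a<..} \<inter> space borel \<in> sets borel"
    using lsc_fun_open_superlevel[OF assms, of a] by auto
qed

lemma lsc_fun_bounded_below_compact:
  fixes u :: "'a::metric_space \<Rightarrow> ereal"
  assumes lsc: "lsc_fun u" and nm: "\<And>x. u x \<noteq> -\<infinity>" and S: "compact S"
  obtains m :: real where "\<And>z. z \<in> S \<Longrightarrow> ereal m < u z"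
proof -
  have "\<exists>m::nat. \<forall>z\<in>S. - ereal (real m) < u z"
  proof (rule ccontr)
    assume "\<not> ?thesis"
    then obtain Z where Z: "\<And>m. Z m \<in> S" "\<And>m. u (Z m) \<le> - ereal (real m)"
      by (metis not_less)
    obtain z s where z: "z \<in> S" "strict_mono s" "(Z \<circ> s) \<longlonglongrightarrow> z"
      using S Z(1) unfolding compact_eq_seq_compact_metric seq_compact_def by metis
    obtain M :: nat where M: "- ereal (real M) < u z"
    proof (cases "u z")
      case (real r)
      obtain M :: nat where "- r < real M" using reals_Archimedean2 by blast
      with real show ?thesis by (intro that[of M]) auto
    qed (use nm[of z] that in auto)
    have "u z \<le> liminf (\<lambda>m. u ((Z \<circ> s) m))" using lsc z(3) unfolding lsc_fun_def by blast
    also have "\<dots> \<le> - ereal (real M)"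
    proof (rule Liminf_le)
      show "\<forall>\<^sub>F m in sequentially. u ((Z \<circ> s) m) \<le> - ereal (real M)"
        using eventually_ge_at_top[of M]
      proof eventually_elim
        case (elim m)
        with seq_suble[OF z(2), of m] have "- ereal (real (s m)) \<le> - ereal (real M)" by simp
        with Z(2)[of "s m"] show ?case unfolding comp_apply by (rule order_trans)
      qed
    qed simp
    finally show False using M by simp
  qed
  then show ?thesis using that by (metis uminus_ereal.simps(1))
qed

definition epi_liminf :: "(nat \<Rightarrow> 'a::topological_space \<Rightarrow> ereal) \<Rightarrow> ('a \<Rightarrow> ereal) \<Rightarrow> bool" where
  "epi_liminf f u \<longleftrightarrow> (\<forall>x X. X \<longlonglongrightarrow> x \<longrightarrow> u x \<le> liminf (\<lambda>k. f k (X k)))"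

lemma lsc_fun_iff_epi_liminf: "lsc_fun u \<longleftrightarrow> epi_liminf (\<lambda>_. u) u"
  by (simp add: lsc_fun_def epi_liminf_def)

lemma epi_converges_iff:
  "epi_converges f u \<longleftrightarrow>
     epi_liminf f u \<and> (\<forall>x. \<exists>X. X \<longlonglongrightarrow> x \<and> limsup (\<lambda>k. f k (X k)) \<le> u x)"
  by (auto simp: epi_converges_def epi_liminf_def)

lemma epi_convergesD:
  assumes "epi_converges f u"
  shows "epi_liminf f u" and "\<exists>X. X \<longlonglongrightarrow> x \<and> limsup (\<lambda>k. f k (X k)) \<le> u x"
  using assms by (auto simp: epi_converges_iff)

lemma epi_liminfD: "epi_liminf f u \<Longrightarrow> X \<longlonglongrightarrow> x \<Longrightarrow> u x \<le> liminf (\<lambda>k. f k (X k))"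
  by (simp add: epi_liminf_def)

lemma epi_liminf_le_liminf_at: "epi_liminf f u \<Longrightarrow> u x \<le> liminf (\<lambda>k. f k x)"
  using epi_liminfD[of f u "\<lambda>_. x" x] by simp

lemma epi_converges_const: "lsc_fun u \<Longrightarrow> epi_converges (\<lambda>_. u) u"
  unfolding epi_converges_iff lsc_fun_iff_epi_liminf
  by (auto intro!: exI[of _ "\<lambda>_. _"] simp: Limsup_const)

lemma epi_liminf_eventually_gt_ball:
  fixes f :: "nat \<Rightarrow> 'a::metric_space \<Rightarrow> ereal"
  assumes lim: "epi_liminf f u" and c: "c < u x"
  shows "\<exists>r>0. \<forall>\<^sub>F k in sequentially. \<forall>z\<in>ball x r. c < f k z"
proof (rule ccontr)
  assume "\<not> ?thesis"
  then have "\<not> (\<forall>\<^sub>F k in sequentially. \<forall>z\<in>ball x (1 / Suc m). c < f k z)" for m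
    by (metis of_nat_0_less_iff zero_less_Suc zero_less_divide_1_iff)
  then have "\<exists>\<^sub>F k in sequentially. \<exists>z\<in>ball x (1 / Suc m). f k z \<le> c" for m
    by (simp add: not_eventually not_less)
  then have "\<exists>k\<ge>N. \<exists>z\<in>ball x (1 / Suc m). f k z \<le> c" for m N
    by (simp add: frequently_sequentially)
  then obtain s where s: "\<And>m. \<exists>z\<in>ball x (1 / Suc m). f (s m) z \<le> c" "strict_mono s"
    using dependent_nat_choice[where P="\<lambda>m k. \<exists>z\<in>ball x (1 / Suc m). f k z \<le> c"
        and Q="\<lambda>_ k k'. k < k'"]
    unfolding strict_mono_Suc_iff by (metis Suc_le_eq le_refl)
  then obtain Z where Z: "\<And>m. dist x (Z m) < 1 / Suc m" "\<And>m. f (s m) (Z m) \<le> c"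
    by (metis mem_ball)
  define X where "X k = (if k \<in> range s then Z (inv s k) else x)" for k
  have Xs: "X (s m) = Z m" for m
    using strict_mono_imp_inj_on[OF s(2)] by (simp add: X_def)
  have "X \<longlonglongrightarrow> x"
  proof (rule metric_LIMSEQ_I)
    fix e :: real assume e: "0 < e"
    then obtain M :: nat where M: "1 / Suc M < e"
      using nat_approx_posE by blast
    have "dist (X k) x < e" if "s M \<le> k" for k
    proof (cases "k \<in> range s")
      case True
      then obtain m where m: "k = s m" by auto
      with that s(2) have "M \<le> m" by (simp add: strict_mono_less_eq)
      then have "1 / real (Suc m) \<le> 1 / Suc M" by (simp add: frac_le)
      with Z(1)[of m] M show ?thesis by (simp add: m Xs dist_commute)
    qed (use e in \<open>simp add: X_def\<close>)
    then show "\<exists>N. \<forall>k\<ge>N. dist (X k) x < e" by blast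
  qed
  then have "u x \<le> liminf (\<lambda>k. f k (X k))" by (rule epi_liminfD[OF lim])
  also have "\<dots> \<le> liminf ((\<lambda>k. f k (X k)) \<circ> s)" by (rule liminf_subseq_mono[OF s(2)])
  also have "\<dots> \<le> c" by (rule Liminf_le) (simp_all add: Xs Z(2))
  finally show False using c by simp
qed

lemma epi_liminf_eventually_gt_compact:
  fixes f :: "nat \<Rightarrow> 'a::metric_space \<Rightarrow> ereal"
  assumes lim: "epi_liminf f u" and S: "compact S" and c: "\<And>z. z \<in> S \<Longrightarrow> c < u z"
  shows "\<forall>\<^sub>F k in sequentially. \<forall>z\<in>S. c < f k z"
proof -
  obtain r where r: "\<And>x. x \<in> S \<Longrightarrow> r x > 0"
    "\<And>x. x \<in> S \<Longrightarrow> \<forall>\<^sub>F k in sequentially. \<forall>z\<in>ball x (r x). c < f k z"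
    using epi_liminf_eventually_gt_ball[OF lim c] by metis
  obtain T where T: "T \<subseteq> S" "finite T" "S \<subseteq> (\<Union>x\<in>T. ball x (r x))"
    using compactE_image[OF S, of S "\<lambda>x. ball x (r x)"] r(1) by force
  have "\<forall>\<^sub>F k in sequentially. \<forall>x\<in>T. \<forall>z\<in>ball x (r x). c < f k z"
    using T r(2) by (intro eventually_ball_finite) auto
  then show ?thesis by eventually_elim (use T(3) in blast)
qed

section \<open>Convex extended-real functions\<close>

lemma dom_funE:
  assumes "\<And>x. f x \<noteq> -\<infinity>" "x \<in> dom_fun f"
  obtains v where "f x = ereal v"
  using assms by (cases "f x") (auto simp: dom_fun_def)

lemma interior_dom_funE:
  assumes "\<And>x. f x \<noteq> -\<infinity>" "x \<in> interior (dom_fun f)"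
  obtains v where "f x = ereal v"
  using assms(1)[of x] assms(2) interior_subset[of "dom_fun f"]
  by (cases "f x") (auto simp: dom_fun_def)

lemma convex_fun_le_combination:
  assumes "convex_fun f" "f x = ereal a" "f y = ereal b" "0 \<le> t" "t \<le> 1"
  shows "f ((1 - t) *\<^sub>R x + t *\<^sub>R y) \<le> ereal ((1 - t) * a + t * b)"
  using assms unfolding convex_fun_def by (metis times_ereal.simps(1) plus_ereal.simps(1))

lemma convex_fun_sublevel:
  assumes cf: "convex_fun f" and nm: "\<And>x. f x \<noteq> -\<infinity>"
  shows "convex {z. f z \<le> ereal c}"
  unfolding convex_alt
proof (intro ballI allI impI, elim conjE)
  fix x y and t :: real
  assume x: "x \<in> {z. f z \<le> ereal c}" and y: "y \<in> {z. f z \<le> ereal c}" and t: "0 \<le> t" "t \<le> 1"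
  obtain a b where a: "f x = ereal a" "a \<le> c" and b: "f y = ereal b" "b \<le> c"
    using x y nm[of x] nm[of y] by (cases "f x"; cases "f y") auto
  have "f ((1 - t) *\<^sub>R x + t *\<^sub>R y) \<le> ereal ((1 - t) * a + t * b)"
    by (rule convex_fun_le_combination[OF cf a(1) b(1) t])
  also have "(1 - t) * a + t * b \<le> (1 - t) * c + t * c"
    using a b t by (intro add_mono mult_left_mono) auto
  finally show "(1 - t) *\<^sub>R x + t *\<^sub>R y \<in> {z. f z \<le> ereal c}" by (simp add: algebra_simps)
qed

lemma convex_dom_fun:
  assumes cf: "convex_fun f" and nm: "\<And>x. f x \<noteq> -\<infinity>"
  shows "convex (dom_fun f)"
  unfolding convex_alt
proof (intro ballI allI impI, elim conjE)
  fix x y and t :: real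
  assume x: "x \<in> dom_fun f" and y: "y \<in> dom_fun f" and t: "0 \<le> t" "t \<le> 1"
  obtain a b where "f x = ereal a" "f y = ereal b" using x y nm by (metis dom_funE)
  then have "f ((1 - t) *\<^sub>R x + t *\<^sub>R y) \<le> ereal ((1 - t) * a + t * b)"
    using convex_fun_le_combination[OF cf _ _ t] by blast
  then show "(1 - t) *\<^sub>R x + t *\<^sub>R y \<in> dom_fun f" by (auto simp: dom_fun_def le_less_trans)
qed

lemma convex_on_interior_dom_fun:
  fixes f :: "'a::real_normed_vector \<Rightarrow> ereal"
  assumes cf: "convex_fun f" and nm: "\<And>x. f x \<noteq> -\<infinity>"
  shows "convex_on (interior (dom_fun f)) (\<lambda>x. real_of_ereal (f x))"
proof (rule convex_onI)
  show "convex (interior (dom_fun f))" by (rule convex_interior[OF convex_dom_fun[OF cf nm]])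
  fix t :: real and x y
  assume t: "0 < t" "t < 1" and x: "x \<in> interior (dom_fun f)" and y: "y \<in> interior (dom_fun f)"
  obtain a where a: "f x = ereal a" using interior_dom_funE[OF nm x] .
  obtain b where b: "f y = ereal b" using interior_dom_funE[OF nm y] .
  have "f ((1 - t) *\<^sub>R x + t *\<^sub>R y) \<le> ereal ((1 - t) * a + t * b)"
    by (rule convex_fun_le_combination[OF cf a b]) (use t in auto)
  with nm show "real_of_ereal (f ((1 - t) *\<^sub>R x + t *\<^sub>R y))
      \<le> (1 - t) * real_of_ereal (f x) + t * real_of_ereal (f y)"
    using a b by (cases "f ((1 - t) *\<^sub>R x + t *\<^sub>R y)") auto
qed

lemma convex_fun_upper_bound_near_interior:
  fixes f :: "'a::euclidean_space \<Rightarrow> ereal"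
  assumes cf: "convex_fun f" and nm: "\<And>x. f x \<noteq> -\<infinity>"
    and x: "x \<in> interior (dom_fun f)" and v: "f x = ereal v" and e: "0 < e"
  obtains \<rho> where "\<rho> > 0" "\<And>y. y \<in> ball x \<rho> \<Longrightarrow> f y < ereal (v + e)"
proof -
  have "continuous_on (interior (dom_fun f)) (\<lambda>x. real_of_ereal (f x))"
    by (rule convex_on_continuous[OF open_interior convex_on_interior_dom_fun[OF cf nm]])
  then obtain d where d: "d > 0" "\<And>y. y \<in> interior (dom_fun f) \<Longrightarrow> dist y x < d \<Longrightarrow>
      dist (real_of_ereal (f y)) (real_of_ereal (f x)) < e"
    using x e unfolding continuous_on_iff by metis
  obtain r where r: "r > 0" "ball x r \<subseteq> interior (dom_fun f)"
    using x open_interior open_contains_ball by blast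
  show ?thesis
  proof
    show "0 < min d r" using d r by simp
    fix y assume y: "y \<in> ball x (min d r)"
    then have "y \<in> interior (dom_fun f)" using r by auto
    moreover obtain c where "f y = ereal c" using interior_dom_funE[OF nm calculation] .
    ultimately show "f y < ereal (v + e)"
      using d(2)[of y] y v by (auto simp: dist_real_def dist_commute)
  qed
qed

lemma convex_fun_approx_from_interior:
  fixes f :: "'a::euclidean_space \<Rightarrow> ereal"
  assumes cf: "convex_fun f" and nm: "\<And>x. f x \<noteq> -\<infinity>"
    and x0: "x0 \<in> interior (dom_fun f)" and v: "f x = ereal v" and e: "0 < e"
  obtains x1 where "x1 \<in> interior (dom_fun f)" "dist x1 x < e" "f x1 < ereal (v + e)"
proof (cases "x \<in> interior (dom_fun f)")
  case True
  with v e show ?thesis by (intro that[of x]) auto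
next
  case False
  obtain v0 where v0: "f x0 = ereal v0" using interior_dom_funE[OF nm x0] .
  \<comment> \<open>Move from \<open>x\<close> a short way towards the interior point \<open>x0\<close>.\<close>
  define d where "d = \<bar>v0 - v\<bar> + norm (x0 - x) + 1"
  define s where "s = min (1/2) (e / (2 * d))"
  define x1 where "x1 = (1 - s) *\<^sub>R x + s *\<^sub>R x0"
  have d: "0 < d" "v0 - v \<le> d" "norm (x0 - x) \<le> d"
    unfolding d_def using norm_ge_zero[of "x0 - x"] abs_ge_self[of "v0 - v"] by linarith+
  have s: "0 < s" "s < 1" "s * d \<le> e / 2"
    using e d(1) by (auto simp: s_def min_def field_simps)
  have "x1 \<in> open_segment x0 x"
    using False x0 s unfolding in_segment
    by (intro conjI exI[of _ "1 - s"]) (auto simp: x1_def algebra_simps)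
  moreover have "x \<in> closure (dom_fun f)" using v closure_subset by (force simp: dom_fun_def)
  then have "open_segment x0 x \<subseteq> interior (dom_fun f)"
    by (rule in_interior_closure_convex_segment[OF convex_dom_fun[OF cf nm] x0])
  ultimately have "x1 \<in> interior (dom_fun f)" by auto
  moreover have "dist x1 x < e"
  proof -
    have "dist x1 x = s * norm (x0 - x)"
      using s by (simp add: x1_def dist_norm algebra_simps flip: scaleR_diff_right)
    also have "\<dots> \<le> s * d" using s d by (intro mult_left_mono) auto
    finally show ?thesis using s e by linarith
  qed
  moreover have "f x1 < ereal (v + e)"
  proof -
    have "f x1 \<le> ereal ((1 - s) * v + s * v0)"
      unfolding x1_def by (rule convex_fun_le_combination[OF cf v v0]) (use s in auto)
    also have "(1 - s) * v + s * v0 < v + e"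
      using mult_left_mono[OF d(2), of s] s e by (simp add: algebra_simps)
    finally show ?thesis by simp
  qed
  ultimately show ?thesis by (rule that)
qed

lemma convex_fun_linear_growth:
  assumes cf: "convex_fun f" and nm: "\<And>x. f x \<noteq> -\<infinity>" and fc: "f c \<le> ereal \<alpha>" and R: "R > 0"
    and sphere: "\<And>z. norm (z - c) = R \<Longrightarrow> ereal (\<alpha> + 1) \<le> f z"
    and inner: "\<And>z. norm (z - c) \<le> R \<Longrightarrow> ereal m \<le> f z"
  shows "ereal (norm (y - c) / R + min m \<alpha> - 1) \<le> f y"
proof (cases "norm (y - c) \<le> R")
  case True
  then have "norm (y - c) / R \<le> 1" using R by simp
  then have "norm (y - c) / R + min m \<alpha> - 1 \<le> m" by linarith
  then show ?thesis using inner[OF True] by (metis ereal_less_eq(3) order_trans)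
next
  case False
  define d where "d = norm (y - c)"
  have dR: "R < d" using False d_def by simp
  then have "y \<noteq> c" using R d_def by auto
  show ?thesis
  proof (cases "f y")
    case (real b)
    obtain a0 where a0: "f c = ereal a0" "a0 \<le> \<alpha>" using fc nm[of c] by (cases "f c") auto
    define t where "t = R / d"
    have t: "0 < t" "t < 1" using dR R by (auto simp: t_def)
    have "((1 - t) *\<^sub>R c + t *\<^sub>R y) - c = t *\<^sub>R (y - c)" by (simp add: algebra_simps)
    then have "norm (((1 - t) *\<^sub>R c + t *\<^sub>R y) - c) = R"
      using \<open>y \<noteq> c\<close> R by (simp add: t_def d_def)
    then have "ereal (\<alpha> + 1) \<le> f ((1 - t) *\<^sub>R c + t *\<^sub>R y)" by (rule sphere)
    also have "\<dots> \<le> ereal ((1 - t) * a0 + t * b)"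
      by (rule convex_fun_le_combination[OF cf a0(1) real]) (use t in auto)
    finally have "\<alpha> + 1 \<le> (1 - t) * a0 + t * b" by simp
    moreover have "(1 - t) * a0 \<le> (1 - t) * \<alpha>" using a0(2) t by (intro mult_left_mono) auto
    ultimately have "1 / t \<le> b - \<alpha>" using t by (simp add: field_simps)
    moreover have "1 / t = d / R" using R dR by (simp add: t_def)
    ultimately show ?thesis using real d_def by simp
  qed (use nm in auto)
qed

lemma convex_fun_linear_growth_near:
  fixes f :: "'a::real_normed_vector \<Rightarrow> ereal"
  assumes cf: "convex_fun f" and nm: "\<And>x. f x \<noteq> -\<infinity>" and R: "0 < R"
    and c: "f c \<le> ereal \<alpha>" "norm (c - x0) < 1"
    and inner: "\<And>z. norm (z - x0) \<le> R + 1 \<Longrightarrow> ereal m \<le> f z"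
    and outer: "\<And>z. norm (z - x0) \<le> R + 1 \<Longrightarrow> R - norm x0 - 1 \<le> norm z \<Longrightarrow> ereal (\<alpha> + 1) \<le> f z"
  shows "ereal (norm y / R - ((norm x0 + 1) / R - min m \<alpha> + 1)) \<le> f y"
proof -
  have near: "norm (z - x0) \<le> R + 1" if "norm (z - c) \<le> R" for z
    using that c(2) norm_triangle_ineq[of "z - c" "c - x0"] by simp
  have "ereal (norm (y - c) / R + min m \<alpha> - 1) \<le> f y"
  proof (rule convex_fun_linear_growth[OF cf nm c(1) R])
    fix z assume z: "norm (z - c) = R"
    then have "R - norm x0 - 1 \<le> norm z"
      using c(2) norm_triangle_ineq4[of z c] norm_triangle_ineq[of "c - x0" x0] by simp
    with z near[of z] show "ereal (\<alpha> + 1) \<le> f z" by (intro outer) auto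
  next
    fix z assume "norm (z - c) \<le> R"
    with near[of z] show "ereal m \<le> f z" by (intro inner) auto
  qed
  moreover have "norm y / R - ((norm x0 + 1) / R - min m \<alpha> + 1) \<le> norm (y - c) / R + min m \<alpha> - 1"
  proof -
    have "norm y - norm x0 - 1 \<le> norm (y - c)"
      using norm_triangle_ineq2[of y c] norm_triangle_ineq[of "c - x0" x0] c(2) by simp
    then have "(norm y - (norm x0 + 1)) / R \<le> norm (y - c) / R" using R by (simp add: divide_right_mono)
    then show ?thesis by (simp add: diff_divide_distrib)
  qed
  ultimately show ?thesis by (metis ereal_less_eq(3) order_trans)
qed

section \<open>The class Conv_coe and uniform coercivity\<close>

lemma
  fixes u :: "'a::euclidean_space \<Rightarrow> ereal"
  assumes "u \<in> Conv_coe"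
  shows Conv_coe_not_MInf: "u x \<noteq> -\<infinity>"
    and Conv_coe_lsc: "lsc_fun u"
    and Conv_coe_convex: "convex_fun u"
    and Conv_coe_coercive: "coercive_fun u"
    and Conv_coe_dom_nonempty: "dom_fun u \<noteq> {}"
    and Conv_coe_aff_dim: "aff_dim (dom_fun u) = int DIM('a)"
  using assms unfolding Conv_coe_def proper_fun_def dom_fun_def by auto

lemma Conv_coe_interior_dom_nonempty:
  fixes u :: "'a::euclidean_space \<Rightarrow> ereal"
  assumes u: "u \<in> Conv_coe"
  shows "interior (dom_fun u) \<noteq> {}"
proof -
  have "interior (dom_fun u) = rel_interior (dom_fun u)"
    using Conv_coe_aff_dim[OF u] by (simp add: interior_rel_interior_gen)
  then show ?thesis
    using rel_interior_eq_empty[OF convex_dom_fun[OF Conv_coe_convex[OF u] Conv_coe_not_MInf[OF u]]]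
      Conv_coe_dom_nonempty[OF u] by simp
qed

lemma Conv_coe_frontier_null:
  fixes u :: "'a::euclidean_space \<Rightarrow> ereal"
  assumes u: "u \<in> Conv_coe"
  shows "frontier (dom_fun u) \<in> null_sets lebesgue"
  using negligible_convex_frontier[OF convex_dom_fun[OF Conv_coe_convex[OF u] Conv_coe_not_MInf[OF u]]]
  by (simp add: negligible_iff_null_sets)

lemma linear_lower_bound_mono:
  assumes "ereal (a' * norm y - b') \<le> w" "0 \<le> a" "a \<le> a'" "b' \<le> b"
  shows "ereal (a * norm y - b) \<le> w"
proof -
  have "a * norm y - b \<le> a' * norm y - b'"
    using assms(2-4) mult_right_mono[OF assms(3) norm_ge_zero[of y]] by linarith
  with assms(1) show ?thesis by (metis ereal_less_eq(3) order_trans)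
qed

text \<open>Epi-convergence forces a common linear lower bound: by the liminf inequality on
  compact sets, eventually each \<open>uk k\<close> is bounded below near a point of \<open>dom u\<close> and
  large on a sphere around it, while a recovery sequence keeps \<open>uk k\<close> small at the
  centre; convexity then gives linear growth.\<close>

lemma epi_converges_uniform_linear_lower_bound:
  fixes uk :: "nat \<Rightarrow> 'a::euclidean_space \<Rightarrow> ereal"
  assumes uk: "\<And>k. uk k \<in> Conv_coe" and u: "u \<in> Conv_coe" and epi: "epi_converges uk u"
  obtains a b where "a > 0" "\<forall>\<^sub>F k in sequentially. \<forall>y. ereal (a * norm y - b) \<le> uk k y"
proof -
  obtain x0 where "x0 \<in> dom_fun u" using Conv_coe_dom_nonempty[OF u] by blast
  then obtain v0 where v0: "u x0 = ereal v0" by (rule dom_funE[OF Conv_coe_not_MInf[OF u]])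
  define \<alpha> where "\<alpha> = v0 + 1"
  have "\<forall>\<^sub>F z in at_infinity. ereal (\<alpha> + 2) < u z"
    using Conv_coe_coercive[OF u] unfolding coercive_fun_def by (rule order_tendstoD) simp
  then obtain B where B: "\<And>z. B \<le> norm z \<Longrightarrow> ereal (\<alpha> + 2) < u z"
    unfolding eventually_at_infinity by blast
  define R where "R = \<bar>B\<bar> + norm x0 + 2"
  have R: "R > 0" unfolding R_def by (simp add: add_nonneg_pos)
  define S1 where "S1 = cball x0 (R + 1)"
  define S2 where "S2 = {z. R - norm x0 - 1 \<le> norm z} \<inter> S1"
  have "compact S1" by (simp add: S1_def)
  moreover have "closed {z::'a. R - norm x0 - 1 \<le> norm z}"
    by (simp add: closed_Collect_le continuous_on_norm_id)
  ultimately have "compact S2" unfolding S2_def by (simp add: closed_Int_compact)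
  obtain m where m: "\<And>z. z \<in> S1 \<Longrightarrow> ereal m < u z"
    using lsc_fun_bounded_below_compact[OF Conv_coe_lsc[OF u] Conv_coe_not_MInf[OF u] \<open>compact S1\<close>]
    by blast
  have lim: "epi_liminf uk u" using epi by (rule epi_convergesD)
  have ev1: "\<forall>\<^sub>F k in sequentially. \<forall>z\<in>S1. ereal m < uk k z"
    using epi_liminf_eventually_gt_compact[OF lim \<open>compact S1\<close> m] .
  have "ereal (\<alpha> + 1) < u z" if "z \<in> S2" for z
  proof -
    have "B \<le> norm z" using that by (auto simp: S2_def R_def)
    then have "ereal (\<alpha> + 2) < u z" by (rule B)
    then show ?thesis by (simp add: less_trans[rotated])
  qed
  then have ev2: "\<forall>\<^sub>F k in sequentially. \<forall>z\<in>S2. ereal (\<alpha> + 1) < uk k z"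
    using epi_liminf_eventually_gt_compact[OF lim \<open>compact S2\<close>] by blast
  obtain X where X: "X \<longlonglongrightarrow> x0" "limsup (\<lambda>k. uk k (X k)) \<le> u x0"
    using epi_convergesD(2)[OF epi] by blast
  have "limsup (\<lambda>k. uk k (X k)) < ereal \<alpha>" using X(2) v0 by (simp add: \<alpha>_def le_less_trans)
  then have ev3: "\<forall>\<^sub>F k in sequentially. uk k (X k) < ereal \<alpha>" by (rule Limsup_lessD)
  have ev4: "\<forall>\<^sub>F k in sequentially. norm (X k - x0) < 1"
    using X(1) by (auto dest: tendstoD[of _ _ _ 1] simp: dist_norm)
  define b where "b = (norm x0 + 1) / R - min m \<alpha> + 1"
  have "\<forall>\<^sub>F k in sequentially. \<forall>y. ereal (norm y / R - b) \<le> uk k y"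
    using ev1 ev2 ev3 ev4
  proof eventually_elim
    case (elim k)
    have "ereal (norm y / R - ((norm x0 + 1) / R - min m \<alpha> + 1)) \<le> uk k y" for y
    proof (rule convex_fun_linear_growth_near[OF Conv_coe_convex[OF uk] Conv_coe_not_MInf[OF uk] R])
      show "uk k (X k) \<le> ereal \<alpha>" using elim(3) by simp
      show "norm (X k - x0) < 1" using elim(4) .
      show "ereal m \<le> uk k z" if "norm (z - x0) \<le> R + 1" for z
        using elim(1) that by (auto simp: S1_def dist_norm norm_minus_commute intro: less_imp_le)
      show "ereal (\<alpha> + 1) \<le> uk k z" if "norm (z - x0) \<le> R + 1" "R - norm x0 - 1 \<le> norm z" for z
        using elim(2) that by (auto simp: S1_def S2_def dist_norm norm_minus_commute intro: less_imp_le)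
    qed
    then show ?case by (simp add: b_def)
  qed
  with R show ?thesis by (intro that[of "1 / R" b]) auto
qed

lemma Conv_coe_linear_lower_bound:
  fixes u :: "'a::euclidean_space \<Rightarrow> ereal"
  assumes u: "u \<in> Conv_coe"
  obtains a b where "a > 0" "\<And>y. ereal (a * norm y - b) \<le> u y"
proof -
  have "epi_converges (\<lambda>_. u) u" by (rule epi_converges_const[OF Conv_coe_lsc[OF u]])
  then obtain a b where "a > 0" "\<forall>\<^sub>F k in sequentially. \<forall>y. ereal (a * norm y - b) \<le> u y"
    by (rule epi_converges_uniform_linear_lower_bound[of "\<lambda>_. u" u, OF u u])
  then show ?thesis by (auto intro: that)
qed

section \<open>Integrability\<close>

lemma power_diff_le_mult:
  fixes x y :: real
  assumes "0 \<le> x" "x \<le> y"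
  shows "y ^ Suc n - x ^ Suc n \<le> real (Suc n) * y ^ n * (y - x)"
proof (induction n)
  case (Suc n)
  have "y ^ Suc (Suc n) - x ^ Suc (Suc n) = y * (y ^ Suc n - x ^ Suc n) + x ^ Suc n * (y - x)"
    by (simp add: algebra_simps)
  also have "\<dots> \<le> y * (real (Suc n) * y ^ n * (y - x)) + y ^ Suc n * (y - x)"
    using Suc assms by (intro add_mono mult_left_mono mult_right_mono power_mono) auto
  also have "\<dots> = real (Suc (Suc n)) * y ^ Suc n * (y - x)" by (simp add: algebra_simps)
  finally show ?case .
qed simp

lemma emeasure_annulus_le:
  fixes r s :: real
  assumes r: "0 \<le> r" "r \<le> s"
  shows "emeasure lborel (ball (0::'a::euclidean_space) s - ball 0 r)
    \<le> ennreal (unit_ball_vol DIM('a) * DIM('a) * s ^ (DIM('a) - 1) * (s - r))"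
proof -
  define n V where "n = DIM('a)" and "V = unit_ball_vol DIM('a)"
  have n: "n = Suc (n - 1)" by (simp add: n_def)
  have V: "0 \<le> V" by (simp add: V_def)
  have "emeasure lborel (ball (0::'a) s - ball 0 r)
      = emeasure lborel (ball (0::'a) s) - emeasure lborel (ball (0::'a) r)"
    using r emeasure_lborel_ball_finite[of "0::'a" r] by (intro emeasure_Diff) auto
  also have "\<dots> = ennreal (V * s ^ n - V * r ^ n)"
    using r V by (simp add: emeasure_ball V_def n_def ennreal_minus power_mono mult_left_mono)
  also have "\<dots> \<le> ennreal (V * n * s ^ (n - 1) * (s - r))"
  proof (rule ennreal_leI)
    have "s ^ n - r ^ n \<le> n * s ^ (n - 1) * (s - r)"
      using power_diff_le_mult[OF r, of "n - 1"] n by simp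
    then show "V * s ^ n - V * r ^ n \<le> V * n * s ^ (n - 1) * (s - r)"
      using mult_left_mono[OF _ V] by (simp add: right_diff_distrib[symmetric] mult.assoc)
  qed
  finally show ?thesis by (simp add: n_def V_def)
qed

lemma emeasure_shell_le:
  fixes a :: real
  assumes a: "0 < a"
  shows "emeasure lborel (ball (0::'a::euclidean_space) ((real j + 1) / a) - ball 0 (real j / a))
    \<le> ennreal (unit_ball_vol DIM('a) * DIM('a) / a ^ DIM('a) * (real j + 1) ^ (DIM('a) - 1))"
proof -
  have "emeasure lborel (ball (0::'a) ((real j + 1) / a) - ball 0 (real j / a))
      \<le> ennreal (unit_ball_vol DIM('a) * DIM('a) * ((real j + 1) / a) ^ (DIM('a) - 1) * (1 / a))"
    using emeasure_annulus_le[of "real j / a" "(real j + 1) / a", where 'a='a] a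
    by (simp add: divide_right_mono flip: diff_divide_distrib)
  also have "\<dots> = ennreal (unit_ball_vol DIM('a) * DIM('a) / a ^ DIM('a) * (real j + 1) ^ (DIM('a) - 1))"
    using a by (simp add: power_divide field_simps power_Suc[symmetric] del: power_Suc)
  finally show ?thesis .
qed

lemma suminf_nn_integral_disjoint_le:
  assumes I: "disjoint_family I" "\<And>j. I j \<in> sets M" and g: "g \<in> borel_measurable M"
  shows "(\<Sum>j. \<integral>\<^sup>+ x. indicator (I j) x * g x \<partial>M) \<le> (\<integral>\<^sup>+ x. g x \<partial>M)"
proof -
  have "(\<Sum>j. \<integral>\<^sup>+ x. indicator (I j) x * g x \<partial>M) = (\<integral>\<^sup>+ x. indicator (\<Union>j. I j) x * g x \<partial>M)"
    using I g by (simp add: nn_integral_suminf[symmetric] suminf_indicator)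
  also have "\<dots> \<le> (\<integral>\<^sup>+ x. g x \<partial>M)"
    by (intro nn_integral_mono) (simp add: indicator_def)
  finally show ?thesis .
qed

lemma M_class_shifted_term_le:
  assumes z: "\<zeta> \<in> M_class n p" and p: "0 \<le> p" and B: "b \<le> real B"
    and t: "real j + B + 2 \<le> t" "t < real j + B + 3"
  shows "\<zeta> (real (j + (2 * B + 3)) - b) powr p * (real (j + (2 * B + 3)) + 1) ^ (n - 1)
    \<le> 2 ^ (n - 1) * (\<zeta> t powr p * t ^ (n - 1))"
proof -
  have "\<zeta> (real (j + (2 * B + 3)) - b) powr p \<le> \<zeta> t powr p"
    using t B by (intro M_class_powr_antimono[OF z p]) simp
  moreover have "(real (j + (2 * B + 3)) + 1) ^ (n - 1) \<le> (2 * t) ^ (n - 1)"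
    using t by (intro power_mono) auto
  ultimately show ?thesis
    using t by (simp add: power_mult_distrib mult_mono mult.left_commute)
qed

lemma M_class_weighted_sum_finite:
  assumes z: "\<zeta> \<in> M_class n p" and p: "0 \<le> p"
  shows "(\<Sum>j. ennreal (\<zeta> (real j - b) powr p * (real j + 1) ^ (n - 1))) < \<infinity>"
proof -
  define F where "F t = ennreal (\<zeta> t powr p * t ^ (n - 1))" for t
  define c :: real where "c = 2 ^ (n - 1)"
  define s where "s j = ennreal (\<zeta> (real j - b) powr p * (real j + 1) ^ (n - 1))" for j :: nat
  obtain B :: nat where B: "b \<le> real B" using real_nat_ceiling_ge by blast
  define J where "J = 2 * B + 3"
  \<comment> \<open>The term \<open>s (j + J)\<close> is dominated by \<open>c F\<close> on the unit interval \<open>I j\<close>.\<close>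
  define I where "I j = {real j + B + 2 ..< real j + B + 3}" for j :: nat
  have [measurable]: "F \<in> borel_measurable borel"
    unfolding F_def using M_class_borel[OF z] by measurable
  have s_le: "s (j + J) \<le> ennreal c * (\<integral>\<^sup>+ t. indicator (I j) t * F t \<partial>lborel)" for j
  proof -
    have "indicator (I j) t * s (j + J) \<le> ennreal c * (indicator (I j) t * F t)" for t
    proof (cases "t \<in> I j")
      case True
      then have "real j + B + 2 \<le> t" "t < real j + B + 3" by (auto simp: I_def)
      from M_class_shifted_term_le[OF z p B this] have "s (j + J) \<le> ennreal c * F t"
        by (simp add: s_def F_def c_def J_def ennreal_mult'[symmetric] ennreal_leI)
      with True show ?thesis by simp
    qed simp
    then have "(\<integral>\<^sup>+ t. indicator (I j) t * s (j + J) \<partial>lborel)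
        \<le> (\<integral>\<^sup>+ t. ennreal c * (indicator (I j) t * F t) \<partial>lborel)"
      by (rule nn_integral_mono)
    then show ?thesis by (simp add: I_def nn_integral_cmult nn_integral_multc)
  qed
  have "(\<Sum>j. s (j + J)) \<le> (\<Sum>j. ennreal c * (\<integral>\<^sup>+ t. indicator (I j) t * F t \<partial>lborel))"
    by (intro suminf_le summableI s_le)
  also have "\<dots> = ennreal c * (\<Sum>j. \<integral>\<^sup>+ t. indicator (I j) t * F t \<partial>lborel)" by simp
  also have "\<dots> \<le> ennreal c * (\<integral>\<^sup>+ t. indicator {0..} t * F t \<partial>lborel)"
  proof (rule mult_left_mono)
    have "disjoint_family I" by (auto simp: disjoint_family_on_def I_def)
    moreover have "indicator (I j) t * (indicator {0..} t * F t) = indicator (I j) t * F t" for j t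
      by (simp add: I_def indicator_def)
    ultimately show "(\<Sum>j. \<integral>\<^sup>+ t. indicator (I j) t * F t \<partial>lborel)
        \<le> (\<integral>\<^sup>+ t. indicator {0..} t * F t \<partial>lborel)"
      using suminf_nn_integral_disjoint_le[of I lborel "\<lambda>t. indicator {0..} t * F t"]
      by (simp add: I_def)
  qed simp
  also have "\<dots> < \<infinity>"
    using M_class_integral_finite[OF z] by (simp add: F_def ennreal_mult_less_top)
  finally have "(\<Sum>j. s (j + J)) < \<infinity>" .
  moreover have "suminf s = (\<Sum>j. s (j + J)) + (\<Sum>j<J. s j)"
    by (rule suminf_offset) (simp add: summableI)
  ultimately have "suminf s < \<infinity>" by (simp add: s_def)
  then show ?thesis unfolding s_def .
qed

lemma integrable_zeta_radial:
  fixes a b :: real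
  assumes z: "\<zeta> \<in> M_class DIM('a::euclidean_space) p" and p: "0 \<le> p" and a: "0 < a"
  shows "integrable lebesgue (\<lambda>y::'a. \<zeta> (a * norm y - b) powr p)"
proof -
  define n where "n = DIM('a)"
  define C where "C = unit_ball_vol n * n / a ^ n"
  define g where "g y = \<zeta> (a * norm y - b) powr p" for y :: 'a
  define h where "h j = ennreal (\<zeta> (real j - b) powr p)" for j :: nat
  \<comment> \<open>Shells on which \<open>g\<close> is dominated by \<open>h j\<close>.\<close>
  define A where "A j = ball (0::'a) ((real j + 1) / a) - ball 0 (real j / a)" for j :: nat
  have A_iff: "y \<in> A j \<longleftrightarrow> \<lfloor>a * norm y\<rfloor> = int j" for y j
    using a by (auto simp: A_def floor_eq_iff field_simps)
  have [measurable]: "g \<in> borel_measurable borel"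
    unfolding g_def using M_class_borel[OF z] by measurable
  have disj: "disjoint_family A" by (auto simp: disjoint_family_on_def A_iff)
  have "ennreal (g y) \<le> (\<Sum>j. h j * indicator (A j) y)" for y
  proof -
    define j where "j = nat \<lfloor>a * norm y\<rfloor>"
    have j: "y \<in> A j" "real j \<le> a * norm y"
      using a unfolding j_def A_iff by (auto simp: of_nat_nat)
    then have "g y \<le> \<zeta> (real j - b) powr p" unfolding g_def by (intro M_class_powr_antimono[OF z p]) simp
    then show ?thesis
      using suminf_cmult_indicator[OF disj j(1), of h] by (simp add: h_def ennreal_leI)
  qed
  then have "(\<integral>\<^sup>+ y. g y \<partial>lborel) \<le> (\<integral>\<^sup>+ y. (\<Sum>j. h j * indicator (A j) y) \<partial>lborel)"
    by (intro nn_integral_mono)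
  also have "\<dots> = (\<Sum>j. h j * emeasure lborel (A j))"
  proof -
    have [measurable]: "A j \<in> sets borel" for j by (simp add: A_def)
    have "(\<lambda>y. h j * indicator (A j) y) \<in> borel_measurable lborel" for j by measurable
    then show ?thesis by (simp add: nn_integral_suminf A_def nn_integral_cmult_indicator)
  qed
  also have "\<dots> \<le> (\<Sum>j. ennreal C * ennreal (\<zeta> (real j - b) powr p * (real j + 1) ^ (n - 1)))"
  proof (intro suminf_le summableI)
    fix j
    have "emeasure lborel (A j) \<le> ennreal (C * (real j + 1) ^ (n - 1))"
      using emeasure_shell_le[OF a, of j, where 'a='a] by (simp add: A_def C_def n_def)
    then have "h j * emeasure lborel (A j) \<le> h j * ennreal (C * (real j + 1) ^ (n - 1))"
      by (rule mult_left_mono) simp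
    also have "\<dots> = ennreal C * ennreal (\<zeta> (real j - b) powr p * (real j + 1) ^ (n - 1))"
      using a by (simp add: h_def C_def ennreal_mult[symmetric] mult_ac)
    finally show "h j * emeasure lborel (A j)
        \<le> ennreal C * ennreal (\<zeta> (real j - b) powr p * (real j + 1) ^ (n - 1))" .
  qed
  also have "\<dots> < \<infinity>"
    using M_class_weighted_sum_finite[OF z p, of b] by (simp add: n_def ennreal_mult_less_top)
  finally have "integrable lborel g"
    by (intro integrableI_nonneg) (auto simp: g_def)
  then have "integrable lebesgue g" by (simp add: integrable_completion)
  then show ?thesis by (simp add: g_def[abs_def])
qed

section \<open>The metric \<open>\<delta>\<close>\<close>

lemma delta_integrand_measurable:
  fixes u v :: "'a::euclidean_space \<Rightarrow> ereal"
  assumes "\<zeta> \<in> M_class n p" "lsc_fun u" "lsc_fun v"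
  shows "delta_integrand \<zeta> p u v \<in> borel_measurable lebesgue"
proof -
  have [measurable]: "zeta_ext \<zeta> \<in> borel_measurable borel"
    "u \<in> borel_measurable borel" "v \<in> borel_measurable borel"
    using assms zeta_ext_borel lsc_fun_borel_measurable by auto
  have "delta_integrand \<zeta> p u v \<in> borel_measurable borel"
    by (intro measurable_abs_powr) measurable
  then show ?thesis by (intro measurable_completion) simp
qed

lemma delta_integrand_le:
  assumes z: "\<zeta> \<in> M_class n p" and p: "0 \<le> p" and "ereal c \<le> u x" "ereal c \<le> v x"
  shows "delta_integrand \<zeta> p u v x \<le> \<zeta> c powr p"
proof -
  have "0 \<le> zeta_ext \<zeta> (u x)" "zeta_ext \<zeta> (u x) \<le> \<zeta> c"
    "0 \<le> zeta_ext \<zeta> (v x)" "zeta_ext \<zeta> (v x) \<le> \<zeta> c"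
    using zeta_ext_nonneg[OF z] zeta_ext_le_zeta[OF z] assms(3,4) by auto
  then have "\<bar>zeta_ext \<zeta> (u x) - zeta_ext \<zeta> (v x)\<bar> \<le> \<zeta> c" by (simp add: abs_le_iff)
  then show ?thesis using p by (intro powr_mono2) auto
qed

lemma integrable_delta_integrand:
  fixes u v :: "'a::euclidean_space \<Rightarrow> ereal"
  assumes z: "\<zeta> \<in> M_class DIM('a) p" and p: "0 \<le> p" and u: "u \<in> Conv_coe" and v: "v \<in> Conv_coe"
  shows "integrable lebesgue (delta_integrand \<zeta> p u v)"
proof -
  obtain a1 b1 where a1: "a1 > 0" "\<And>y. ereal (a1 * norm y - b1) \<le> u y"
    using Conv_coe_linear_lower_bound[OF u] by blast
  obtain a2 b2 where a2: "a2 > 0" "\<And>y. ereal (a2 * norm y - b2) \<le> v y"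
    using Conv_coe_linear_lower_bound[OF v] by blast
  define a b where "a = min a1 a2" and "b = max b1 b2"
  have "a > 0" using a1 a2 by (simp add: a_def)
  show ?thesis
  proof (rule Bochner_Integration.integrable_bound[OF integrable_zeta_radial[OF z p \<open>a > 0\<close>]])
    show "delta_integrand \<zeta> p u v \<in> borel_measurable lebesgue"
      by (rule delta_integrand_measurable[OF z Conv_coe_lsc[OF u] Conv_coe_lsc[OF v]])
    have "delta_integrand \<zeta> p u v y \<le> \<zeta> (a * norm y - b) powr p" for y
    proof (rule delta_integrand_le[OF z p])
      show "ereal (a * norm y - b) \<le> u y"
        using \<open>a > 0\<close> by (intro linear_lower_bound_mono[OF a1(2)]) (auto simp: a_def b_def)
      show "ereal (a * norm y - b) \<le> v y"
        using \<open>a > 0\<close> by (intro linear_lower_bound_mono[OF a2(2)]) (auto simp: a_def b_def)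
    qed
    then show "AE y in lebesgue. norm (delta_integrand \<zeta> p u v y) \<le> norm (\<zeta> (a * norm y - b) powr p)"
      by simp
  qed
qed

lemma convex_powr_ineq:
  fixes x y l p :: real
  assumes x: "0 \<le> x" and y: "0 \<le> y" and l: "0 \<le> l" "l \<le> 1" and p: "1 \<le> p"
  shows "(l * x + (1 - l) * y) powr p \<le> l * x powr p + (1 - l) * y powr p"
proof -
  have scale: "(c * z) powr p \<le> c * z powr p" if "0 \<le> c" "c \<le> 1" "0 \<le> z" for c z :: real
  proof -
    have "c powr p \<le> c powr 1" using that p by (intro powr_mono') auto
    then show ?thesis using that by (simp add: powr_mult mult_right_mono)
  qed
  consider "x = 0" | "y = 0" | "x > 0" "y > 0" using x y by linarith
  then show ?thesis
  proof cases
    case 1 then show ?thesis using scale[of "1 - l" y] l y by simp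
  next
    case 2 then show ?thesis using scale[of l x] l x by simp
  next
    case 3
    with convex_onD[OF powr_convex[OF p], of "1 - l" x y] l show ?thesis
      by (simp add: algebra_simps)
  qed
qed

text \<open>Minkowski's inequality, via the convexity of \<open>t \<mapsto> t\<^sup>p\<close> applied to
  \<open>(f + g)/(A + B) = A/(A + B) \<cdot> f/A + B/(A + B) \<cdot> g/B\<close>.\<close>

lemma minkowski_normalized:
  fixes f g h :: "'x \<Rightarrow> real"
  assumes p: "1 \<le> p" and nonneg: "\<And>x. 0 \<le> f x" "\<And>x. 0 \<le> g x" "\<And>x. 0 \<le> h x"
    and hfg: "\<And>x. h x \<le> f x + g x"
    and int: "integrable M (\<lambda>x. f x powr p)" "integrable M (\<lambda>x. g x powr p)"
      "integrable M (\<lambda>x. h x powr p)"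
    and A: "0 < A" "integral\<^sup>L M (\<lambda>x. f x powr p) \<le> A powr p"
    and B: "0 < B" "integral\<^sup>L M (\<lambda>x. g x powr p) \<le> B powr p"
  shows "integral\<^sup>L M (\<lambda>x. h x powr p) \<le> (A + B) powr p"
proof -
  define S l where "S = A + B" and "l = A / S"
  have S: "0 < S" and l: "0 \<le> l" "l \<le> 1" "1 - l = B / S"
    using A B by (auto simp: S_def l_def field_simps)
  have pt: "h x powr p / S powr p \<le> l * (f x powr p / A powr p) + (1 - l) * (g x powr p / B powr p)"
    for x
  proof -
    have "l * (f x / A) = f x / S" using A(1) by (simp add: l_def)
    moreover have "(1 - l) * (g x / B) = g x / S" using B(1) by (simp add: l(3))
    ultimately have "l * (f x / A) + (1 - l) * (g x / B) = (f x + g x) / S"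
      by (simp add: add_divide_distrib)
    moreover have "h x / S \<le> (f x + g x) / S" using hfg S by (simp add: divide_right_mono)
    ultimately have "h x / S \<le> l * (f x / A) + (1 - l) * (g x / B)" by simp
    moreover have "h x powr p / S powr p = (h x / S) powr p" using nonneg(3) S by (simp add: powr_divide)
    ultimately have "h x powr p / S powr p \<le> (l * (f x / A) + (1 - l) * (g x / B)) powr p"
      using nonneg(3) S p by (simp add: powr_mono2)
    also have "\<dots> \<le> l * (f x / A) powr p + (1 - l) * (g x / B) powr p"
      using nonneg A B l p by (intro convex_powr_ineq) auto
    finally show ?thesis by (simp add: powr_divide)
  qed
  have "integral\<^sup>L M (\<lambda>x. h x powr p) / S powr p = integral\<^sup>L M (\<lambda>x. h x powr p / S powr p)" by simp
  also have "\<dots> \<le> integral\<^sup>L M (\<lambda>x. l * (f x powr p / A powr p) + (1 - l) * (g x powr p / B powr p))"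
    using int pt by (intro integral_mono) auto
  also have "\<dots> = l * (integral\<^sup>L M (\<lambda>x. f x powr p) / A powr p)
      + (1 - l) * (integral\<^sup>L M (\<lambda>x. g x powr p) / B powr p)"
    using int by simp
  also have "\<dots> \<le> l * 1 + (1 - l) * 1"
    using A B l by (intro add_mono mult_left_mono) auto
  finally show ?thesis using S by (simp add: divide_le_eq S_def)
qed

lemma minkowski:
  fixes f g h :: "'x \<Rightarrow> real"
  assumes p: "1 \<le> p" and nonneg: "\<And>x. 0 \<le> f x" "\<And>x. 0 \<le> g x" "\<And>x. 0 \<le> h x"
    and hfg: "\<And>x. h x \<le> f x + g x"
    and int: "integrable M (\<lambda>x. f x powr p)" "integrable M (\<lambda>x. g x powr p)"
      "integrable M (\<lambda>x. h x powr p)"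
  shows "(integral\<^sup>L M (\<lambda>x. h x powr p)) powr (1 / p)
      \<le> (integral\<^sup>L M (\<lambda>x. f x powr p)) powr (1 / p) + (integral\<^sup>L M (\<lambda>x. g x powr p)) powr (1 / p)"
    (is "?H powr _ \<le> ?F powr _ + ?G powr _")
proof (rule field_le_epsilon)
  fix e :: real assume e: "0 < e"
  have root: "I \<le> (I powr (1 / p) + e / 2) powr p" if "0 \<le> I" for I
  proof -
    have "I = (I powr (1 / p)) powr p" using that p by (simp add: powr_powr)
    also have "\<dots> \<le> (I powr (1 / p) + e / 2) powr p" using e p by (intro powr_mono2) auto
    finally show ?thesis .
  qed
  have F: "0 \<le> ?F" and G: "0 \<le> ?G" and H: "0 \<le> ?H"
    using nonneg by (auto intro!: integral_nonneg_AE)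
  define A B where "A = ?F powr (1 / p) + e / 2" and "B = ?G powr (1 / p) + e / 2"
  have "0 < A" "0 < B" using e by (auto simp: A_def B_def intro!: add_nonneg_pos)
  then have "?H \<le> (A + B) powr p"
    using root[OF F] root[OF G] by (intro minkowski_normalized[OF p nonneg hfg int]) (simp_all add: A_def B_def)
  then have "?H powr (1 / p) \<le> ((A + B) powr p) powr (1 / p)"
    using p H by (intro powr_mono2) auto
  also have "\<dots> = ?F powr (1 / p) + ?G powr (1 / p) + e"
    using p \<open>0 < A\<close> \<open>0 < B\<close> by (simp add: powr_powr A_def B_def)
  finally show "?H powr (1 / p) \<le> ?F powr (1 / p) + ?G powr (1 / p) + e" .
qed

lemma delta_zp_nonneg: "0 \<le> delta_zp \<zeta> p u v"
  unfolding delta_zp_def by simp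

lemma delta_zp_commute: "delta_zp \<zeta> p u v = delta_zp \<zeta> p v u"
  unfolding delta_zp_def by (simp add: abs_minus_commute)

lemma delta_zp_self: "delta_zp \<zeta> p u u = 0"
  unfolding delta_zp_def by simp

lemma delta_zp_triangle:
  fixes u v w :: "'a::euclidean_space \<Rightarrow> ereal"
  assumes z: "\<zeta> \<in> M_class DIM('a) p" and p: "1 \<le> p"
    and u: "u \<in> Conv_coe" and v: "v \<in> Conv_coe" and w: "w \<in> Conv_coe"
  shows "delta_zp \<zeta> p u w \<le> delta_zp \<zeta> p u v + delta_zp \<zeta> p v w"
  unfolding delta_zp_def
proof (rule minkowski[OF p])
  fix x
  show "\<bar>zeta_ext \<zeta> (u x) - zeta_ext \<zeta> (w x)\<bar>
      \<le> \<bar>zeta_ext \<zeta> (u x) - zeta_ext \<zeta> (v x)\<bar> + \<bar>zeta_ext \<zeta> (v x) - zeta_ext \<zeta> (w x)\<bar>"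
    using abs_triangle_ineq[of "zeta_ext \<zeta> (u x) - zeta_ext \<zeta> (v x)" "zeta_ext \<zeta> (v x) - zeta_ext \<zeta> (w x)"] by simp
qed (use integrable_delta_integrand[OF z _ u v] integrable_delta_integrand[OF z _ v w]
       integrable_delta_integrand[OF z _ u w] p in simp_all)

lemma delta_zp_pow:
  assumes "1 \<le> p"
  shows "delta_zp \<zeta> p u v powr p = integral\<^sup>L lebesgue (delta_integrand \<zeta> p u v)"
  using assms by (simp add: delta_zp_def powr_powr integral_nonneg_AE)

section \<open>Epi-convergence implies convergence in \<open>\<delta>\<close>\<close>

lemma closed_convex_mem_near_cube_corners:
  fixes x :: "'a::euclidean_space"
  assumes C: "closed C" "convex C"
    and near: "\<And>\<sigma>. \<sigma> \<in> Basis \<rightarrow>\<^sub>E {-1, 1} \<Longrightarrow> \<exists>z\<in>C. dist z (x + r *\<^sub>R (\<Sum>i\<in>Basis. \<sigma> i *\<^sub>R i)) < r"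
  shows "x \<in> C"
proof (rule ccontr)
  assume "x \<notin> C"
  then obtain a \<beta> where ab: "inner a x < \<beta>" "\<And>z. z \<in> C \<Longrightarrow> \<beta> < inner a z"
    using separating_hyperplane_closed_point[OF C(2,1)] by blast
  \<comment> \<open>The corner lying on the same side of the hyperplane as \<open>x\<close>.\<close>
  define \<sigma> where "\<sigma> = restrict (\<lambda>i. if 0 < inner a i then -1 else (1::real)) Basis"
  have "\<sigma> \<in> Basis \<rightarrow>\<^sub>E {-1, 1}" by (simp add: \<sigma>_def restrict_PiE_iff)
  then obtain z where z: "z \<in> C" "dist z (x + r *\<^sub>R (\<Sum>i\<in>Basis. \<sigma> i *\<^sub>R i)) < r"
    using near by blast
  have "inner a i * inner (z - x) i \<le> 0" if i: "i \<in> Basis" for i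
  proof -
    define d where "d = z - (x + r *\<^sub>R (\<Sum>i\<in>Basis. \<sigma> i *\<^sub>R i))"
    have "inner (z - x) i = r * \<sigma> i + inner d i"
      using i by (simp add: d_def inner_diff_left inner_add_left)
    moreover have "\<bar>inner d i\<bar> < r"
      using Basis_le_norm[OF i, of d] z(2) by (simp add: d_def dist_norm)
    ultimately show ?thesis
    proof (cases "0 < inner a i")
      case True
      with i \<open>\<bar>inner d i\<bar> < r\<close> have "inner (z - x) i < 0"
        unfolding \<open>inner (z - x) i = r * \<sigma> i + inner d i\<close> by (simp add: \<sigma>_def abs_less_iff)
      with True show ?thesis by (simp add: mult_pos_neg less_imp_le)
    next
      case False
      with i \<open>\<bar>inner d i\<bar> < r\<close> have "0 < inner (z - x) i"
        unfolding \<open>inner (z - x) i = r * \<sigma> i + inner d i\<close> by (simp add: \<sigma>_def abs_less_iff)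
      with False show ?thesis by (simp add: mult_nonpos_nonneg)
    qed
  qed
  then have "(\<Sum>i\<in>Basis. inner a i * inner (z - x) i) \<le> 0" by (rule sum_nonpos)
  then have "inner a (z - x) \<le> 0" by (simp only: euclidean_inner[of a "z - x"])
  moreover have "0 < inner a (z - x)" using ab(1) ab(2)[OF z(1)] by (simp add: inner_diff_right)
  ultimately show False by simp
qed

lemma norm_sum_sign_Basis_le:
  assumes "\<sigma> \<in> (Basis :: 'a::euclidean_space set) \<rightarrow>\<^sub>E {-1, 1::real}"
  shows "norm (\<Sum>i\<in>Basis. \<sigma> i *\<^sub>R i) \<le> DIM('a)"
proof -
  have "norm (\<Sum>i\<in>Basis. \<sigma> i *\<^sub>R i) \<le> (\<Sum>i\<in>(Basis::'a set). norm (\<sigma> i *\<^sub>R i))" by (rule norm_sum)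
  also have "\<dots> = (\<Sum>i\<in>(Basis::'a set). 1)" using assms by (intro sum.cong) (auto simp: PiE_iff)
  finally show ?thesis by simp
qed

text \<open>Upper bound at interior points: the sublevel set \<open>{uk k \<le> v + e}\<close> is closed and convex,
  and recovery sequences put points of it near every corner of a small cube around \<open>x\<close>.\<close>

lemma epi_converges_eventually_le_interior:
  fixes uk :: "nat \<Rightarrow> 'a::euclidean_space \<Rightarrow> ereal"
  assumes uk: "\<And>k. uk k \<in> Conv_coe" and u: "u \<in> Conv_coe" and epi: "epi_converges uk u"
    and x: "x \<in> interior (dom_fun u)" and v: "u x = ereal v" and e: "0 < e"
  shows "\<forall>\<^sub>F k in sequentially. uk k x \<le> ereal (v + e)"
proof -
  obtain \<rho> where \<rho>: "\<rho> > 0" "\<And>y. y \<in> ball x \<rho> \<Longrightarrow> u y < ereal (v + e)"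
    using convex_fun_upper_bound_near_interior[OF Conv_coe_convex[OF u] Conv_coe_not_MInf[OF u] x v e]
    by blast
  define \<Sigma> where "\<Sigma> = (Basis :: 'a set) \<rightarrow>\<^sub>E {-1, 1::real}"
  define r where "r = \<rho> / (DIM('a) + 1)"
  define corner where "corner \<sigma> = x + r *\<^sub>R (\<Sum>i\<in>Basis. \<sigma> i *\<^sub>R i)" for \<sigma> :: "'a \<Rightarrow> real"
  have r: "0 < r" "r * DIM('a) < \<rho>" using \<rho> by (auto simp: r_def field_simps)
  have corner_u: "u (corner \<sigma>) < ereal (v + e)" if "\<sigma> \<in> \<Sigma>" for \<sigma>
  proof (rule \<rho>(2))
    have "r * norm (\<Sum>i\<in>Basis. \<sigma> i *\<^sub>R i) < \<rho>"
      using mult_left_mono[OF norm_sum_sign_Basis_le[OF that[unfolded \<Sigma>_def]], of r] r by linarith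
    with r show "corner \<sigma> \<in> ball x \<rho>" by (simp add: corner_def dist_norm)
  qed
  have "\<forall>\<sigma>. \<exists>Y. Y \<longlonglongrightarrow> corner \<sigma> \<and> limsup (\<lambda>k. uk k (Y k)) \<le> u (corner \<sigma>)"
    using epi_convergesD(2)[OF epi] by blast
  then obtain Y where Y: "\<And>\<sigma>. Y \<sigma> \<longlonglongrightarrow> corner \<sigma>" "\<And>\<sigma>. limsup (\<lambda>k. uk k (Y \<sigma> k)) \<le> u (corner \<sigma>)"
    by metis
  have "\<forall>\<^sub>F k in sequentially. uk k (Y \<sigma> k) \<le> ereal (v + e) \<and> dist (Y \<sigma> k) (corner \<sigma>) < r"
    if "\<sigma> \<in> \<Sigma>" for \<sigma>
  proof (rule eventually_conj)
    show "\<forall>\<^sub>F k in sequentially. uk k (Y \<sigma> k) \<le> ereal (v + e)"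
      using Limsup_lessD[OF le_less_trans[OF Y(2) corner_u[OF that]]] by (auto elim: eventually_mono)
    show "\<forall>\<^sub>F k in sequentially. dist (Y \<sigma> k) (corner \<sigma>) < r" using Y(1) r(1) by (rule tendstoD)
  qed
  then have "\<forall>\<^sub>F k in sequentially. \<forall>\<sigma>\<in>\<Sigma>. uk k (Y \<sigma> k) \<le> ereal (v + e) \<and> dist (Y \<sigma> k) (corner \<sigma>) < r"
    by (intro eventually_ball_finite) (auto simp: \<Sigma>_def finite_PiE)
  then show ?thesis
  proof eventually_elim
    case (elim k)
    have "x \<in> {z. uk k z \<le> ereal (v + e)}"
    proof (rule closed_convex_mem_near_cube_corners)
      show "closed {z. uk k z \<le> ereal (v + e)}" by (rule lsc_fun_closed_sublevel[OF Conv_coe_lsc[OF uk]])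
      show "convex {z. uk k z \<le> ereal (v + e)}"
        by (rule convex_fun_sublevel[OF Conv_coe_convex[OF uk] Conv_coe_not_MInf[OF uk]])
    qed (use elim in \<open>auto simp: \<Sigma>_def corner_def\<close>)
    then show ?case by simp
  qed
qed

lemma epi_liminf_tendsto_infinity:
  assumes "epi_liminf f u" "u x = \<infinity>"
  shows "(\<lambda>k. f k x) \<longlonglongrightarrow> \<infinity>"
  using epi_liminf_le_liminf_at[OF assms(1), of x] assms(2)
  by (simp add: Liminf_PInfty)

lemma epi_converges_tendsto_off_frontier:
  fixes uk :: "nat \<Rightarrow> 'a::euclidean_space \<Rightarrow> ereal"
  assumes uk: "\<And>k. uk k \<in> Conv_coe" and u: "u \<in> Conv_coe" and epi: "epi_converges uk u"
    and x: "x \<notin> frontier (dom_fun u)"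
  shows "(\<lambda>k. uk k x) \<longlonglongrightarrow> u x"
proof (cases "x \<in> interior (dom_fun u)")
  case True
  then obtain v where v: "u x = ereal v" using interior_dom_funE[where f=u, OF Conv_coe_not_MInf[OF u]] by blast
  show ?thesis
  proof (rule order_tendstoI)
    fix a assume "a < u x"
    then have "a < liminf (\<lambda>k. uk k x)"
      using epi_liminf_le_liminf_at[OF epi_convergesD(1)[OF epi]] by (rule less_le_trans)
    then show "\<forall>\<^sub>F k in sequentially. a < uk k x" by (rule less_LiminfD)
  next
    fix a assume "u x < a"
    then obtain c where c: "u x < ereal c" "ereal c < a" using ereal_dense2 by blast
    have "\<forall>\<^sub>F k in sequentially. uk k x \<le> ereal (v + (c - v))"
      using c(1) v by (intro epi_converges_eventually_le_interior[OF uk u epi True v]) simp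
    then show "\<forall>\<^sub>F k in sequentially. uk k x < a" by eventually_elim (use c(2) in simp)
  qed
next
  case False
  with x have "x \<notin> dom_fun u" using closure_subset by (auto simp: frontier_def)
  then have "u x = \<infinity>" by (simp add: dom_fun_def)
  with epi_liminf_tendsto_infinity[OF epi_convergesD(1)[OF epi]] show ?thesis by simp
qed

lemma epi_converges_AE_delta_integrand_tendsto:
  fixes uk :: "nat \<Rightarrow> 'a::euclidean_space \<Rightarrow> ereal"
  assumes uk: "\<And>k. uk k \<in> Conv_coe" and u: "u \<in> Conv_coe" and epi: "epi_converges uk u"
    and z: "\<zeta> \<in> M_class DIM('a) p" and p: "0 < p"
  shows "AE x in lebesgue. (\<lambda>k. delta_integrand \<zeta> p (uk k) u x) \<longlonglongrightarrow> 0"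
proof (rule AE_I'[OF Conv_coe_frontier_null[OF u]], rule subsetI, rule ccontr)
  fix x
  assume "x \<in> {x \<in> space lebesgue. \<not> (\<lambda>k. delta_integrand \<zeta> p (uk k) u x) \<longlonglongrightarrow> 0}"
  then have nc: "\<not> (\<lambda>k. delta_integrand \<zeta> p (uk k) u x) \<longlonglongrightarrow> 0" by simp
  assume "x \<notin> frontier (dom_fun u)"
  then have "(\<lambda>k. zeta_ext \<zeta> (uk k x)) \<longlonglongrightarrow> zeta_ext \<zeta> (u x)"
    using p by (intro tendsto_zeta_ext[OF z] epi_converges_tendsto_off_frontier[OF uk u epi]
        Conv_coe_not_MInf[OF u]) simp_all
  then have "(\<lambda>k. \<bar>zeta_ext \<zeta> (uk k x) - zeta_ext \<zeta> (u x)\<bar>) \<longlonglongrightarrow> 0"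
    by (intro tendsto_rabs_zero) (simp add: LIM_zero)
  then have "(\<lambda>k. delta_integrand \<zeta> p (uk k) u x) \<longlonglongrightarrow> 0"
    using p by (intro tendsto_zero_powrI) auto
  with nc show False ..
qed

lemma epi_converges_imp_delta_zp_tendsto_zero:
  fixes uk :: "nat \<Rightarrow> 'a::euclidean_space \<Rightarrow> ereal"
  assumes uk: "\<And>k. uk k \<in> Conv_coe" and u: "u \<in> Conv_coe" and epi: "epi_converges uk u"
    and z: "\<zeta> \<in> M_class DIM('a) p" and p: "1 \<le> p"
  shows "(\<lambda>k. delta_zp \<zeta> p (uk k) u) \<longlonglongrightarrow> 0"
proof -
  obtain a1 b1 where a1: "a1 > 0" "\<forall>\<^sub>F k in sequentially. \<forall>y. ereal (a1 * norm y - b1) \<le> uk k y"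
    using epi_converges_uniform_linear_lower_bound[OF uk u epi] by blast
  then obtain K where K: "\<And>k y. K \<le> k \<Longrightarrow> ereal (a1 * norm y - b1) \<le> uk k y"
    by (auto simp: eventually_sequentially)
  obtain a2 b2 where a2: "a2 > 0" "\<And>y. ereal (a2 * norm y - b2) \<le> u y"
    using Conv_coe_linear_lower_bound[OF u] by blast
  define a b where "a = min a1 a2" and "b = max b1 b2"
  have a: "0 < a" using a1 a2 by (simp add: a_def)
  \<comment> \<open>The radial majorant is only valid from \<open>K\<close> on, hence the shift.\<close>
  define s where "s k = delta_integrand \<zeta> p (uk (k + K)) u" for k
  define w where "w y = \<zeta> (a * norm y - b) powr p" for y :: 'a
  have "(\<lambda>k. integral\<^sup>L lebesgue (s k)) \<longlonglongrightarrow> integral\<^sup>L lebesgue (\<lambda>_::'a. 0 :: real)"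
  proof (rule integral_dominated_convergence[where w=w])
    show "s k \<in> borel_measurable lebesgue" for k
      unfolding s_def by (rule delta_integrand_measurable[OF z Conv_coe_lsc[OF uk] Conv_coe_lsc[OF u]])
    show "integrable lebesgue w"
      unfolding w_def using p by (intro integrable_zeta_radial[OF z _ a]) simp
    have "AE x in lebesgue. (\<lambda>k. delta_integrand \<zeta> p (uk k) u x) \<longlonglongrightarrow> 0"
      using p by (intro epi_converges_AE_delta_integrand_tendsto[OF uk u epi z]) simp
    then show "AE x in lebesgue. (\<lambda>k. s k x) \<longlonglongrightarrow> 0"
      by eventually_elim (unfold s_def, rule LIMSEQ_ignore_initial_segment)
    have "s k y \<le> w y" for k y
      unfolding s_def w_def
    proof (rule delta_integrand_le[OF z])
      show "ereal (a * norm y - b) \<le> uk (k + K) y"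
        using a by (intro linear_lower_bound_mono[OF K]) (auto simp: a_def b_def)
      show "ereal (a * norm y - b) \<le> u y"
        using a by (intro linear_lower_bound_mono[OF a2(2)]) (auto simp: a_def b_def)
    qed (use p in simp)
    then show "AE y in lebesgue. norm (s k y) \<le> w y" for k
      by (simp add: s_def)
  qed simp
  then have "(\<lambda>k. integral\<^sup>L lebesgue (delta_integrand \<zeta> p (uk k) u)) \<longlonglongrightarrow> 0"
    by (simp add: s_def LIMSEQ_offset[where k=K])
  then have "(\<lambda>k. integral\<^sup>L lebesgue (delta_integrand \<zeta> p (uk k) u) powr (1 / p)) \<longlonglongrightarrow> 0"
    using p by (intro tendsto_zero_powrI) auto
  then show ?thesis unfolding delta_zp_def .
qed

section \<open>Convergence in \<open>\<delta>\<close> implies epi-convergence\<close>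

lemma integral_ge_measure_mult:
  fixes f :: "'a \<Rightarrow> real"
  assumes f: "integrable M f" "\<And>x. x \<in> space M \<Longrightarrow> 0 \<le> f x"
    and A: "A \<in> sets M" "emeasure M A < \<infinity>" and c: "0 \<le> c" "\<And>x. x \<in> A \<Longrightarrow> c \<le> f x"
  shows "c * measure M A \<le> integral\<^sup>L M f"
proof -
  have "c * measure M A = integral\<^sup>L M (\<lambda>x. c * indicator A x)" using A by simp
  also have "\<dots> \<le> integral\<^sup>L M f"
  proof (rule integral_mono)
    show "integrable M (\<lambda>x. c * indicator A x)"
      using A by (intro integrable_mult_right integrable_real_indicator) auto
    show "c * indicator A x \<le> f x" if "x \<in> space M" for x
      using c f(2)[OF that] by (cases "x \<in> A") auto
  qed (rule f(1))
  finally show ?thesis .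
qed

lemma zeta_ext_diff_ge:
  assumes z: "\<zeta> \<in> M_class n p" and "w \<noteq> -\<infinity>" "w \<le> ereal s" "ereal t \<le> w'"
  shows "\<zeta> s - \<zeta> t \<le> zeta_ext \<zeta> w - zeta_ext \<zeta> w'"
  using zeta_le_zeta_ext[OF z assms(2,3)] zeta_ext_le_zeta[OF z assms(4)] by linarith

lemma delta_integral_ge_on:
  fixes f g :: "'a::euclidean_space \<Rightarrow> ereal"
  assumes z: "\<zeta> \<in> M_class DIM('a) p" and p: "0 \<le> p" and f: "f \<in> Conv_coe" and g: "g \<in> Conv_coe"
    and S: "S \<in> sets lebesgue" "emeasure lebesgue S < \<infinity>"
    and \<eta>: "0 \<le> \<eta>" "\<And>y. y \<in> S \<Longrightarrow> \<eta> \<le> \<bar>zeta_ext \<zeta> (f y) - zeta_ext \<zeta> (g y)\<bar>"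
  shows "\<eta> powr p * measure lebesgue S \<le> integral\<^sup>L lebesgue (delta_integrand \<zeta> p f g)"
  using \<eta> p by (intro integral_ge_measure_mult[OF integrable_delta_integrand[OF z p f g] _ S])
    (auto intro: powr_mono2)

text \<open>If \<open>\<delta>(uk k, u) \<rightarrow> 0\<close>, then near any point of the domain of \<open>u\<close> some value of \<open>uk k\<close> is
  eventually almost as small as \<open>u\<close>: otherwise the integrand would stay large on a ball
  around an interior point where \<open>u\<close> is small.\<close>

lemma delta_tendsto_zero_eventually_near_le:
  fixes uk :: "nat \<Rightarrow> 'a::euclidean_space \<Rightarrow> ereal"
  assumes uk: "\<And>k. uk k \<in> Conv_coe" and u: "u \<in> Conv_coe"
    and z: "\<zeta> \<in> M_class DIM('a) p" and p: "0 \<le> p"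
    and I: "(\<lambda>k. integral\<^sup>L lebesgue (delta_integrand \<zeta> p (uk k) u)) \<longlonglongrightarrow> 0"
    and v: "u x = ereal v" and e: "0 < e"
  shows "\<forall>\<^sub>F k in sequentially. \<exists>y\<in>ball x e. uk k y \<le> ereal (v + e)"
proof -
  note u_conv = Conv_coe_convex[OF u] Conv_coe_not_MInf[OF u]
  obtain x0 where "x0 \<in> interior (dom_fun u)" using Conv_coe_interior_dom_nonempty[OF u] by blast
  then obtain x1 where x1: "x1 \<in> interior (dom_fun u)" "dist x1 x < e / 2" "u x1 < ereal (v + e / 2)"
    using convex_fun_approx_from_interior[OF u_conv _ v, of x0 "e / 2"] e by auto
  obtain v1 where v1: "u x1 = ereal v1" using interior_dom_funE[OF u_conv(2) x1(1)] .
  obtain \<rho> where \<rho>: "\<rho> > 0" "\<And>y. y \<in> ball x1 \<rho> \<Longrightarrow> u y < ereal (v1 + (v + 3 * e / 4 - v1))"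
    using convex_fun_upper_bound_near_interior[OF u_conv x1(1) v1, of "v + 3 * e / 4 - v1"] x1(3) v1 e
    by auto
  define B where "B = ball x1 (min \<rho> (e / 2))"
  have B_sub: "B \<subseteq> ball x e"
  proof
    fix y assume "y \<in> B"
    then have "dist x1 y < e / 2" by (simp add: B_def)
    with x1(2) show "y \<in> ball x e" using dist_triangle[of x y x1] by (simp add: dist_commute)
  qed
  have u_B: "u y \<le> ereal (v + 3 * e / 4)" if "y \<in> B" for y
    using \<rho>(2)[of y] that by (simp add: B_def less_imp_le)
  define \<eta> where "\<eta> = \<zeta> (v + 3 * e / 4) - \<zeta> (v + e)"
  have \<eta>: "0 < \<eta>" unfolding \<eta>_def using M_class_strict_antimono[OF z, of "v + 3 * e / 4" "v + e"] e by simp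
  have mB: "0 < measure lebesgue B" using \<rho>(1) e by (simp add: B_def content_ball_pos)
  have "\<forall>\<^sub>F k in sequentially. integral\<^sup>L lebesgue (delta_integrand \<zeta> p (uk k) u) < \<eta> powr p * measure lebesgue B"
    using \<eta> mB by (intro order_tendstoD(2)[OF I]) simp
  then show ?thesis
  proof eventually_elim
    case (elim k)
    show ?case
    proof (rule ccontr)
      assume "\<not> ?case"
      then have big: "ereal (v + e) < uk k y" if "y \<in> B" for y using B_sub that by (auto simp: not_le)
      have "\<eta> powr p * measure lebesgue B \<le> integral\<^sup>L lebesgue (delta_integrand \<zeta> p (uk k) u)"
      proof (rule delta_integral_ge_on[OF z p uk u])
        fix y assume "y \<in> B"
        with zeta_ext_diff_ge[OF z Conv_coe_not_MInf[OF u] u_B, of y "v + e" "uk k y"] big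
        show "\<eta> \<le> \<bar>zeta_ext \<zeta> (uk k y) - zeta_ext \<zeta> (u y)\<bar>" by (simp add: \<eta>_def less_imp_le)
      qed (use \<eta> emeasure_lborel_ball_finite in \<open>auto simp: B_def\<close>)
      with elim show False by simp
    qed
  qed
qed

lemma recovery_sequence_of_eventually_near:
  fixes f :: "nat \<Rightarrow> 'a::metric_space \<Rightarrow> ereal"
  assumes near: "\<And>e. 0 < e \<Longrightarrow> \<forall>\<^sub>F k in sequentially. \<exists>y\<in>ball x e. f k y \<le> ereal (c + e)"
  shows "\<exists>X. X \<longlonglongrightarrow> x \<and> limsup (\<lambda>k. f k (X k)) \<le> ereal c"
proof -
  define P where "P m k \<longleftrightarrow> (\<exists>y\<in>ball x (1 / Suc m). f k y \<le> ereal (c + 1 / Suc m))" for m k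
  obtain N where N: "\<And>m k. N m \<le> k \<Longrightarrow> P m k"
    using near[of "1 / Suc _"] unfolding P_def eventually_sequentially by (metis of_nat_0_less_iff
        zero_less_Suc zero_less_divide_1_iff)
  have "\<forall>m k. \<exists>y. P m k \<longrightarrow> y \<in> ball x (1 / Suc m) \<and> f k y \<le> ereal (c + 1 / Suc m)"
    unfolding P_def by blast
  then obtain Y where Y: "\<And>m k. P m k \<Longrightarrow> Y m k \<in> ball x (1 / Suc m) \<and> f k (Y m k) \<le> ereal (c + 1 / Suc m)"
    by metis
  \<comment> \<open>At time \<open>k\<close>, use the finest scale \<open>m \<le> k\<close> that is already good.\<close>
  define g where "g k = Max {m. m \<le> k \<and> P m k}" for k
  define X where "X k = (if \<exists>m\<le>k. P m k then Y (g k) k else x)" for k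
  have good: "\<forall>\<^sub>F k in sequentially. dist (X k) x < 1 / Suc M \<and> f k (X k) \<le> ereal (c + 1 / Suc M)" for M
    using eventually_ge_at_top[of "max M (N M)"]
  proof eventually_elim
    case (elim k)
    then have M: "M \<in> {m. m \<le> k \<and> P m k}" using N[of M k] by simp
    have fin: "finite {m. m \<le> k \<and> P m k}" by simp
    have "M \<le> g k" "P (g k) k" using Max_ge[OF fin M] Max_in[OF fin] M by (auto simp: g_def)
    moreover have "X k = Y (g k) k" using M by (auto simp: X_def)
    moreover have "1 / real (Suc (g k)) \<le> 1 / Suc M" using \<open>M \<le> g k\<close> by (simp add: frac_le)
    ultimately show ?case using Y[of "g k" k] by (auto simp: dist_commute intro: order_trans)
  qed
  show ?thesis
  proof (intro exI conjI)
    show "X \<longlonglongrightarrow> x"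
    proof (rule tendstoI)
      fix e :: real assume "0 < e"
      then obtain M :: nat where "1 / Suc M < e" using nat_approx_posE by blast
      with good[of M] show "\<forall>\<^sub>F k in sequentially. dist (X k) x < e" by (auto elim: eventually_mono)
    qed
    show "limsup (\<lambda>k. f k (X k)) \<le> ereal c"
    proof (rule ereal_le_epsilon2)
      fix e :: real assume "0 < e"
      then obtain M :: nat where "1 / Suc M < e" using nat_approx_posE by blast
      with good[of M] have "\<forall>\<^sub>F k in sequentially. f k (X k) \<le> ereal c + ereal e"
        by (auto elim!: eventually_mono intro: order_trans)
      then show "limsup (\<lambda>k. f k (X k)) \<le> ereal c + ereal e" by (rule Limsup_bounded)
    qed
  qed
qed

lemma delta_tendsto_zero_imp_recovery:
  fixes uk :: "nat \<Rightarrow> 'a::euclidean_space \<Rightarrow> ereal"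
  assumes uk: "\<And>k. uk k \<in> Conv_coe" and u: "u \<in> Conv_coe"
    and z: "\<zeta> \<in> M_class DIM('a) p" and p: "0 \<le> p"
    and I: "(\<lambda>k. integral\<^sup>L lebesgue (delta_integrand \<zeta> p (uk k) u)) \<longlonglongrightarrow> 0"
  shows "\<exists>X. X \<longlonglongrightarrow> x \<and> limsup (\<lambda>k. uk k (X k)) \<le> u x"
proof (cases "u x")
  case (real v)
  then show ?thesis
    using recovery_sequence_of_eventually_near[of x uk v]
      delta_tendsto_zero_eventually_near_le[OF uk u z p I real] by simp
next
  case PInf
  then show ?thesis by (intro exI[of _ "\<lambda>_. x"]) simp
qed (use Conv_coe_not_MInf[OF u] in simp)

lemma homothety_image:
  fixes G :: "'a::euclidean_space set"
  assumes G: "G \<in> sets borel" and t: "0 < t"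
  shows homothety_image_borel: "(\<lambda>y. t *\<^sub>R y + c) ` G \<in> sets borel"
    and emeasure_homothety_image:
      "emeasure lebesgue ((\<lambda>y. t *\<^sub>R y + c) ` G) = ennreal (t ^ DIM('a)) * emeasure lebesgue G"
    and measure_homothety_image:
      "measure lebesgue ((\<lambda>y. t *\<^sub>R y + c) ` G) = t ^ DIM('a) * measure lebesgue G"
proof -
  have "(\<lambda>y. t *\<^sub>R y + c) ` G = (\<lambda>z. (1 / t) *\<^sub>R (z - c)) -` G"
  proof (intro set_eqI iffI)
    fix z assume "z \<in> (\<lambda>z. (1 / t) *\<^sub>R (z - c)) -` G"
    moreover have "z = t *\<^sub>R ((1 / t) *\<^sub>R (z - c)) + c" using t by simp
    ultimately show "z \<in> (\<lambda>y. t *\<^sub>R y + c) ` G" by blast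
  qed (use t in auto)
  moreover have meas: "(\<lambda>z. (1 / t) *\<^sub>R (z - c)) \<in> borel_measurable borel"
    by (intro borel_measurable_continuous_onI continuous_intros)
  ultimately show "(\<lambda>y. t *\<^sub>R y + c) ` G \<in> sets borel" using measurable_sets[OF meas G] by simp
  show "emeasure lebesgue ((\<lambda>y. t *\<^sub>R y + c) ` G) = ennreal (t ^ DIM('a)) * emeasure lebesgue G"
    using emeasure_lebesgue_affine[of t c G] t by simp
  show "measure lebesgue ((\<lambda>y. t *\<^sub>R y + c) ` G) = t ^ DIM('a) * measure lebesgue G"
    using measure_lebesgue_affine[of t c G] t by simp
qed

lemma convex_fun_homothety_le:
  assumes cf: "convex_fun f" and nm: "\<And>x. f x \<noteq> -\<infinity>"
    and "f X \<le> ereal a" "f y \<le> ereal b" "0 \<le> t" "t \<le> 1"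
  shows "f (t *\<^sub>R y + (1 - t) *\<^sub>R X) \<le> ereal (a + t * (b - a))"
proof -
  obtain a' b' where a': "f X = ereal a'" "a' \<le> a" and b': "f y = ereal b'" "b' \<le> b"
    using assms(3,4) nm[of X] nm[of y] by (cases "f X"; cases "f y") auto
  have "f ((1 - t) *\<^sub>R X + t *\<^sub>R y) \<le> ereal ((1 - t) * a' + t * b')"
    using assms(5,6) by (intro convex_fun_le_combination[OF cf a'(1) b'(1)])
  also have "(1 - t) * a' + t * b' \<le> (1 - t) * a + t * b"
    using a' b' assms(5,6) by (intro add_mono mult_left_mono) auto
  finally show ?thesis by (simp add: algebra_simps)
qed

lemma homothety_mem_ball:
  fixes X x x0 y :: "'a::real_normed_vector"
  assumes X: "dist X x < r / 2" and y: "y \<in> ball x0 \<rho>" and t: "0 \<le> t" "t \<le> 1"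
    and tr: "t * (norm (x0 - x) + \<rho>) \<le> r / 2"
  shows "t *\<^sub>R y + (1 - t) *\<^sub>R X \<in> ball x r"
proof -
  have "t *\<^sub>R y + (1 - t) *\<^sub>R X - x = (1 - t) *\<^sub>R (X - x) + t *\<^sub>R ((y - x0) + (x0 - x))"
    by (simp add: algebra_simps)
  then have "norm (t *\<^sub>R y + (1 - t) *\<^sub>R X - x)
      \<le> norm ((1 - t) *\<^sub>R (X - x)) + norm (t *\<^sub>R ((y - x0) + (x0 - x)))"
    by (simp only: norm_triangle_ineq)
  also have "\<dots> \<le> (1 - t) * norm (X - x) + t * (norm (y - x0) + norm (x0 - x))"
    using t norm_triangle_ineq[of "y - x0" "x0 - x"] by (simp add: mult_left_mono)
  also have "\<dots> \<le> norm (X - x) + t * (norm (x0 - x) + \<rho>)"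
  proof (rule add_mono)
    show "(1 - t) * norm (X - x) \<le> norm (X - x)" using t by (simp add: mult_left_le_one_le)
    have "norm (y - x0) \<le> \<rho>" using y by (simp add: dist_norm norm_minus_commute)
    then show "t * (norm (y - x0) + norm (x0 - x)) \<le> t * (norm (x0 - x) + \<rho>)"
      using t by (simp add: mult_left_mono)
  qed
  also have "\<dots> < r" using X tr by (simp add: dist_norm)
  finally show ?thesis by (simp add: dist_norm norm_minus_commute)
qed

lemma min_mult_half_le:
  fixes \<alpha> \<beta> m g I :: real
  assumes "\<alpha> * (m - g) \<le> I" "\<beta> * g \<le> I" "0 \<le> \<alpha>" "0 \<le> \<beta>" "0 \<le> g"
  shows "min \<alpha> \<beta> * (m / 2) \<le> I"
proof (cases "g \<le> m / 2")
  case True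
  then have "min \<alpha> \<beta> * (m / 2) \<le> min \<alpha> \<beta> * (m - g)" using assms(3,4) by (intro mult_left_mono) auto
  also have "\<dots> \<le> \<alpha> * (m - g)" using True assms(5) by (intro mult_right_mono) auto
  finally show ?thesis using assms(1) by linarith
next
  case False
  then have "min \<alpha> \<beta> * (m / 2) \<le> min \<alpha> \<beta> * g" using assms(3,4) by (intro mult_left_mono) auto
  also have "\<dots> \<le> \<beta> * g" using assms(5) by (intro mult_right_mono) auto
  finally show ?thesis using assms(2) by linarith
qed

text \<open>Let \<open>u \<le> C\<close> on a ball \<open>B\<close>, \<open>u > c\<close> near
  \<open>x\<close>, and \<open>f X \<le> a\<close> for a point \<open>X\<close> close to \<open>x\<close>. Either \<open>f > C + 1\<close> on half of \<open>B\<close>, or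
  \<open>f \<le> C + 1\<close> on a set \<open>G\<close> filling half of \<open>B\<close>; then by convexity \<open>f \<le> b\<close> on the
  homothetic copy of \<open>G\<close> shrunk towards \<open>X\<close>, which lies where \<open>u > c\<close>.\<close>

lemma delta_integral_ge_convex_below:
  fixes f u :: "'a::euclidean_space \<Rightarrow> ereal"
  assumes z: "\<zeta> \<in> M_class DIM('a) p" and p: "0 \<le> p" and f: "f \<in> Conv_coe" and u: "u \<in> Conv_coe"
    and u_le: "\<And>y. y \<in> ball x0 \<rho> \<Longrightarrow> u y \<le> ereal C"
    and u_gt: "\<And>y. y \<in> ball x r \<Longrightarrow> ereal c < u y"
    and fX: "f X \<le> ereal a" and X: "dist X x < r / 2" and bc: "b \<le> c"
    and t: "0 < t" "t \<le> 1" "t * (C + 1 - a) \<le> b - a" "t * (norm (x0 - x) + \<rho>) \<le> r / 2"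
  shows "min ((\<zeta> C - \<zeta> (C + 1)) powr p) ((\<zeta> b - \<zeta> c) powr p * t ^ DIM('a))
      * (measure lebesgue (ball x0 \<rho>) / 2) \<le> integral\<^sup>L lebesgue (delta_integrand \<zeta> p f u)"
proof -
  define B G where "B = ball x0 \<rho>" and "G = ball x0 \<rho> \<inter> {y. f y \<le> ereal (C + 1)}"
  define H where "H = (\<lambda>y. t *\<^sub>R y + (1 - t) *\<^sub>R X) ` G"
  define \<eta>0 \<eta>1 where "\<eta>0 = \<zeta> C - \<zeta> (C + 1)" and "\<eta>1 = \<zeta> b - \<zeta> c"
  define I where "I = integral\<^sup>L lebesgue (delta_integrand \<zeta> p f u)"
  have \<eta>: "0 < \<eta>0" "0 \<le> \<eta>1"
    using M_class_strict_antimono[OF z, of C "C + 1"] M_class_antimono[OF z bc] by (auto simp: \<eta>0_def \<eta>1_def)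
  have G_borel: "G \<in> sets borel"
    using lsc_fun_closed_sublevel[OF Conv_coe_lsc[OF f]] by (auto simp: G_def)
  have B_fin: "emeasure lebesgue B < \<infinity>" using emeasure_lborel_ball_finite[of x0 \<rho>] by (simp add: B_def)
  have G_fin: "emeasure lebesgue G < \<infinity>"
    using emeasure_mono[of G B lebesgue] B_fin by (auto simp: G_def B_def)
  have "\<eta>0 powr p * measure lebesgue (B - G) \<le> I"
    unfolding I_def
  proof (rule delta_integral_ge_on[OF z p f u])
    fix y assume "y \<in> B - G"
    then have "u y \<le> ereal C" "ereal (C + 1) \<le> f y" using u_le by (auto simp: B_def G_def)
    from zeta_ext_diff_ge[OF z Conv_coe_not_MInf[OF u] this]
    show "\<eta>0 \<le> \<bar>zeta_ext \<zeta> (f y) - zeta_ext \<zeta> (u y)\<bar>" by (simp add: \<eta>0_def)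
  next
    show "B - G \<in> sets lebesgue" using G_borel by (simp add: B_def)
    then show "emeasure lebesgue (B - G) < \<infinity>"
      using emeasure_mono[of "B - G" B lebesgue] B_fin by (simp add: B_def)
  qed (use \<eta> in simp)
  moreover have "\<eta>1 powr p * measure lebesgue H \<le> I"
    unfolding I_def
  proof (rule delta_integral_ge_on[OF z p f u])
    fix w assume "w \<in> H"
    then obtain y where y: "y \<in> ball x0 \<rho>" "f y \<le> ereal (C + 1)"
      and w: "w = t *\<^sub>R y + (1 - t) *\<^sub>R X" by (auto simp: H_def G_def)
    have "f w \<le> ereal (a + t * (C + 1 - a))"
      unfolding w using t by (intro convex_fun_homothety_le[OF Conv_coe_convex[OF f]
            Conv_coe_not_MInf[OF f] fX y(2)]) auto
    then have fw: "f w \<le> ereal b" using t(3) by (simp add: order_trans)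
    have "ereal c < u w" unfolding w using X y(1) t by (intro u_gt homothety_mem_ball) auto
    from zeta_ext_diff_ge[OF z Conv_coe_not_MInf[OF f] fw less_imp_le[OF this]]
    show "\<eta>1 \<le> \<bar>zeta_ext \<zeta> (f w) - zeta_ext \<zeta> (u w)\<bar>" by (simp add: \<eta>1_def)
  next
    show "H \<in> sets lebesgue" "emeasure lebesgue H < \<infinity>"
      using homothety_image_borel[OF G_borel t(1)] emeasure_homothety_image[OF G_borel t(1)] G_fin
      by (simp_all add: H_def ennreal_mult_less_top)
  qed (use \<eta> in simp)
  moreover have "measure lebesgue H = t ^ DIM('a) * measure lebesgue G"
    unfolding H_def by (rule measure_homothety_image[OF G_borel t(1)])
  moreover have "measure lebesgue (B - G) = measure lebesgue B - measure lebesgue G"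
    using G_borel B_fin by (intro measure_Diff) (auto simp: G_def B_def)
  ultimately have bounds: "\<eta>0 powr p * (measure lebesgue (ball x0 \<rho>) - measure lebesgue G) \<le> I"
    "(\<eta>1 powr p * t ^ DIM('a)) * measure lebesgue G \<le> I"
    by (simp_all add: B_def I_def mult.assoc)
  have "min (\<eta>0 powr p) (\<eta>1 powr p * t ^ DIM('a)) * (measure lebesgue (ball x0 \<rho>) / 2) \<le> I"
    by (rule min_mult_half_le[OF bounds]) (use t(1) in simp_all)
  then show ?thesis by (simp add: I_def \<eta>0_def \<eta>1_def)
qed

lemma Conv_coe_bounded_above_ball:
  fixes u :: "'a::euclidean_space \<Rightarrow> ereal"
  assumes u: "u \<in> Conv_coe"
  obtains x0 \<rho> C where "0 < \<rho>" "\<And>y. y \<in> ball x0 \<rho> \<Longrightarrow> u y \<le> ereal C"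
proof -
  obtain x0 where x0: "x0 \<in> interior (dom_fun u)" using Conv_coe_interior_dom_nonempty[OF u] by blast
  then obtain w0 where w0: "u x0 = ereal w0" by (rule interior_dom_funE[where f=u, OF Conv_coe_not_MInf[OF u]])
  obtain \<rho> where "0 < \<rho>" "\<And>y. y \<in> ball x0 \<rho> \<Longrightarrow> u y < ereal (w0 + 1)"
    using convex_fun_upper_bound_near_interior[OF Conv_coe_convex[OF u] Conv_coe_not_MInf[OF u] x0 w0,
        of 1] by auto
  then show ?thesis by (intro that[of \<rho> x0 "w0 + 1"]) (auto intro: less_imp_le)
qed

lemma delta_integral_uniformly_ge_below:
  fixes u :: "'a::euclidean_space \<Rightarrow> ereal"
  assumes z: "\<zeta> \<in> M_class DIM('a) p" and p: "0 \<le> p" and u: "u \<in> Conv_coe"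
    and \<rho>: "0 < \<rho>" "\<And>y. y \<in> ball x0 \<rho> \<Longrightarrow> u y \<le> ereal C"
    and r: "0 < r" "\<And>y. y \<in> ball x r \<Longrightarrow> ereal c < u y" and ac: "a < c"
  obtains \<beta> where "0 < \<beta>" "\<And>f X. f \<in> Conv_coe \<Longrightarrow> f X \<le> ereal a \<Longrightarrow> dist X x < r / 2 \<Longrightarrow>
      \<beta> \<le> integral\<^sup>L lebesgue (delta_integrand \<zeta> p f u)"
proof -
  define b C' D where "b = (a + c) / 2" and "C' = max C a" and "D = norm (x0 - x) + \<rho>"
  define t where "t = min 1 (min ((b - a) / (C' + 1 - a)) (r / (2 * D)))"
  have b: "a < b" "b < c" using ac by (auto simp: b_def)
  have u_le: "u y \<le> ereal C'" if "y \<in> ball x0 \<rho>" for y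
    using \<rho>(2)[OF that] by (auto simp: C'_def intro: order_trans)
  have CA: "0 < C' + 1 - a" and D: "0 < D" using \<rho>(1) by (auto simp: C'_def D_def add_nonneg_pos)
  have t: "0 < t" "t \<le> 1" using b r(1) CA D by (auto simp: t_def)
  have "t \<le> (b - a) / (C' + 1 - a)" "t \<le> r / (2 * D)" by (auto simp: t_def)
  then have t': "t * (C' + 1 - a) \<le> b - a" "t * (norm (x0 - x) + \<rho>) \<le> r / 2"
    using CA D by (simp_all add: pos_le_divide_eq D_def algebra_simps)
  define \<beta> where "\<beta> = min ((\<zeta> C' - \<zeta> (C' + 1)) powr p) ((\<zeta> b - \<zeta> c) powr p * t ^ DIM('a))
      * (measure lebesgue (ball x0 \<rho>) / 2)"
  show ?thesis
  proof (rule that)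
    have "0 < \<zeta> C' - \<zeta> (C' + 1)" "0 < \<zeta> b - \<zeta> c"
      using M_class_strict_antimono[OF z, of C' "C' + 1"] M_class_strict_antimono[OF z, of b c] b by auto
    then show "0 < \<beta>" using t(1) \<rho>(1) by (simp add: \<beta>_def content_ball_pos)
    fix f X assume "f \<in> Conv_coe" "f X \<le> ereal a" "dist X x < r / 2"
    then show "\<beta> \<le> integral\<^sup>L lebesgue (delta_integrand \<zeta> p f u)"
      unfolding \<beta>_def using b(2) t t'
      by (intro delta_integral_ge_convex_below[OF z p _ u u_le r(2)]) auto
  qed
qed

lemma delta_tendsto_zero_imp_epi_liminf:
  fixes uk :: "nat \<Rightarrow> 'a::euclidean_space \<Rightarrow> ereal"
  assumes uk: "\<And>k. uk k \<in> Conv_coe" and u: "u \<in> Conv_coe"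
    and z: "\<zeta> \<in> M_class DIM('a) p" and p: "0 \<le> p"
    and I: "(\<lambda>k. integral\<^sup>L lebesgue (delta_integrand \<zeta> p (uk k) u)) \<longlonglongrightarrow> 0"
  shows "epi_liminf uk u"
  unfolding epi_liminf_def
proof (intro allI impI, rule ccontr)
  fix x X assume X: "X \<longlonglongrightarrow> x" and "\<not> u x \<le> liminf (\<lambda>k. uk k (X k))"
  then have "liminf (\<lambda>k. uk k (X k)) < u x" by simp
  then obtain a where a: "liminf (\<lambda>k. uk k (X k)) < ereal a" "ereal a < u x"
    using ereal_dense2 by blast
  then obtain c where "ereal a < ereal c" and c: "ereal c < u x" using ereal_dense2 by blast
  then have ac: "a < c" by simp
  obtain r where r: "0 < r" "\<And>y. y \<in> ball x r \<Longrightarrow> ereal c < u y"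
    using lsc_fun_open_superlevel[OF Conv_coe_lsc[OF u], of "ereal c"] c
    by (force simp: open_contains_ball)
  obtain x0 \<rho> C where \<rho>: "0 < \<rho>" "\<And>y. y \<in> ball x0 \<rho> \<Longrightarrow> u y \<le> ereal C"
    using Conv_coe_bounded_above_ball[OF u] by blast
  obtain \<beta> where \<beta>: "0 < \<beta>" "\<And>f X. f \<in> Conv_coe \<Longrightarrow> f X \<le> ereal a \<Longrightarrow> dist X x < r / 2 \<Longrightarrow>
      \<beta> \<le> integral\<^sup>L lebesgue (delta_integrand \<zeta> p f u)"
    using delta_integral_uniformly_ge_below[OF z p u \<rho> r ac] by blast
  have "\<forall>\<^sub>F k in sequentially. integral\<^sup>L lebesgue (delta_integrand \<zeta> p (uk k) u) < \<beta>
      \<and> dist (X k) x < r / 2"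
    using order_tendstoD(2)[OF I \<beta>(1)] tendstoD[OF X, of "r / 2"] r(1) by (simp add: eventually_conj)
  moreover have "\<not> (\<forall>\<^sub>F k in sequentially. ereal a \<le> uk k (X k))"
  proof
    assume "\<forall>\<^sub>F k in sequentially. ereal a \<le> uk k (X k)"
    then have "ereal a \<le> liminf (\<lambda>k. uk k (X k))" by (rule Liminf_bounded)
    with a(1) show False by simp
  qed
  then have "\<exists>\<^sub>F k in sequentially. uk k (X k) < ereal a" by (simp add: not_eventually not_le)
  ultimately obtain k where k: "integral\<^sup>L lebesgue (delta_integrand \<zeta> p (uk k) u) < \<beta>"
    "dist (X k) x < r / 2" "uk k (X k) < ereal a"
    using frequently_ex[OF frequently_eventually_frequently] by blast
  have "\<beta> \<le> integral\<^sup>L lebesgue (delta_integrand \<zeta> p (uk k) u)"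
    using \<beta>(2)[OF uk less_imp_le[OF k(3)] k(2)] .
  with k(1) show False by simp
qed

lemma delta_zp_tendsto_zero_iff_epi_converges:
  fixes uk :: "nat \<Rightarrow> 'a::euclidean_space \<Rightarrow> ereal"
  assumes uk: "\<And>k. uk k \<in> Conv_coe" and u: "u \<in> Conv_coe"
    and z: "\<zeta> \<in> M_class DIM('a) p" and p: "1 \<le> p"
  shows "((\<lambda>k. delta_zp \<zeta> p (uk k) u) \<longlonglongrightarrow> 0) \<longleftrightarrow> epi_converges uk u"
proof
  assume "(\<lambda>k. delta_zp \<zeta> p (uk k) u) \<longlonglongrightarrow> 0"
  then have "(\<lambda>k. delta_zp \<zeta> p (uk k) u powr p) \<longlonglongrightarrow> 0"
    using p by (intro tendsto_zero_powrI) (auto simp: delta_zp_nonneg)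
  then have I: "(\<lambda>k. integral\<^sup>L lebesgue (delta_integrand \<zeta> p (uk k) u)) \<longlonglongrightarrow> 0"
    by (simp add: delta_zp_pow[OF p])
  show "epi_converges uk u"
    unfolding epi_converges_iff
    using delta_tendsto_zero_imp_epi_liminf[OF uk u z _ I] delta_tendsto_zero_imp_recovery[OF uk u z _ I] p
    by simp
next
  assume "epi_converges uk u"
  then show "(\<lambda>k. delta_zp \<zeta> p (uk k) u) \<longlonglongrightarrow> 0"
    by (rule epi_converges_imp_delta_zp_tendsto_zero[OF uk u _ z p])
qed

lemma delta_zp_eq_zero_imp_eq:
  fixes u v :: "'a::euclidean_space \<Rightarrow> ereal"
  assumes z: "\<zeta> \<in> M_class DIM('a) p" and p: "1 \<le> p"
    and u: "u \<in> Conv_coe" and v: "v \<in> Conv_coe" and d: "delta_zp \<zeta> p u v = 0"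
  shows "u = v"
proof
  fix x
  have epi: "epi_converges (\<lambda>_. u) v"
    using delta_zp_tendsto_zero_iff_epi_converges[of "\<lambda>_. u" v, OF u v z p] d by simp
  obtain X where X: "X \<longlonglongrightarrow> x" "limsup (\<lambda>k. u (X k)) \<le> v x"
    using epi_convergesD(2)[OF epi] by blast
  have "u x \<le> liminf (\<lambda>k. u (X k))" using Conv_coe_lsc[OF u] X(1) by (simp add: lsc_fun_def)
  also have "\<dots> \<le> limsup (\<lambda>k. u (X k))" by (simp add: Liminf_le_Limsup)
  also have "\<dots> \<le> v x" by (rule X(2))
  finally have "u x \<le> v x" .
  moreover have "v x \<le> u x"
    using epi_liminf_le_liminf_at[OF epi_convergesD(1)[OF epi], of x] by (simp add: Liminf_const)
  ultimately show "u x = v x" by simp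
qed

theorem theorem1p1:
  fixes p :: real and \<zeta> :: "real \<Rightarrow> real"
  assumes p: "1 \<le> p"
    and zeta: "\<zeta> \<in> M_class DIM('a::euclidean_space) p"
  shows "(\<forall>u\<in>(Conv_coe :: ('a \<Rightarrow> ereal) set). \<forall>v\<in>Conv_coe.
            integrable lebesgue (\<lambda>x. \<bar>zeta_ext \<zeta> (u x) - zeta_ext \<zeta> (v x)\<bar> powr p)
          \<and> 0 \<le> delta_zp \<zeta> p u v
          \<and> (delta_zp \<zeta> p u v = 0 \<longleftrightarrow> u = v)
          \<and> delta_zp \<zeta> p u v = delta_zp \<zeta> p v u
          \<and> (\<forall>w\<in>Conv_coe. delta_zp \<zeta> p u w \<le> delta_zp \<zeta> p u v + delta_zp \<zeta> p v w))
       \<and> (\<forall>uk u. (\<forall>k. uk k \<in> (Conv_coe :: ('a \<Rightarrow> ereal) set)) \<longrightarrow> u \<in> Conv_coe \<longrightarrow>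
            (((\<lambda>k. delta_zp \<zeta> p (uk k) u) \<longlonglongrightarrow> 0) \<longleftrightarrow> epi_converges uk u))"
proof (intro conjI ballI allI impI)
  fix u v :: "'a \<Rightarrow> ereal" assume u: "u \<in> Conv_coe" and v: "v \<in> Conv_coe"
  show "integrable lebesgue (\<lambda>x. \<bar>zeta_ext \<zeta> (u x) - zeta_ext \<zeta> (v x)\<bar> powr p)"
    using integrable_delta_integrand[OF zeta _ u v] p by simp
  show "0 \<le> delta_zp \<zeta> p u v" by (rule delta_zp_nonneg)
  show "delta_zp \<zeta> p u v = 0 \<longleftrightarrow> u = v"
    using delta_zp_eq_zero_imp_eq[OF zeta p u v] delta_zp_self[of \<zeta> p u] by blast
  show "delta_zp \<zeta> p u v = delta_zp \<zeta> p v u" by (rule delta_zp_commute)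
  fix w :: "'a \<Rightarrow> ereal" assume w: "w \<in> Conv_coe"
  show "delta_zp \<zeta> p u w \<le> delta_zp \<zeta> p u v + delta_zp \<zeta> p v w"
    by (rule delta_zp_triangle[OF zeta p u v w])
next
  fix uk :: "nat \<Rightarrow> 'a \<Rightarrow> ereal" and u :: "'a \<Rightarrow> ereal"
  assume "\<forall>k. uk k \<in> Conv_coe" and u: "u \<in> Conv_coe"
  then show "((\<lambda>k. delta_zp \<zeta> p (uk k) u) \<longlonglongrightarrow> 0) \<longleftrightarrow> epi_converges uk u"
    by (intro delta_zp_tendsto_zero_iff_epi_converges[OF _ u zeta p]) simp
qed

end
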